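(* Order the letters by $a_1<a_2<\cdots<a_M<x_1<x_2<\cdots<x_N$. Then the labeling $\Lambda$ is an $R^*$-labeling of the poset of shuffles $W_{MN}$.
   Context: Let $P$ be a finite ranked poset with $\hat0,\hat1$ of rank $n$ and $\mathcal{M}(P)$ its set of maximal chains. A labeling $\Lambda:\mathcal{M}(P)\to L^n$ ($L$ totally ordered) is a $C$-labeling if for every maximal chain $c=(\hat0=w^0\lessdot w^1\lessdot\cdots\lessdot w^n=\hat1)$ and every $r\in[n]$, $\Lambda_r(c)$ depends only on $(w^0\lessdot\cdots\lessdot w^r)$. A $C$-labeling is an $R^*$-labeling if every chain $\hat0=w^0\lessdot w^1\lessdot\cdots\lessdot w^r<u$ has a unique completion by coverings $w^r\lessdot w^{r+1}\lessdot\cdots\lessdot w^s=u$ such that $\Lambda_{r+1}(c)<\Lambda_{r+2}(c)<\cdots<\Lambda_s(c)$, where $c$ is any maximal chain beginning with $w^0\lessdot\cdots\lessdot w^s$. Poset of shuffles: $\mathcal{A}=\{a_1,\dots,a_M\}$, $\mathcal{X}=\{x_1,\dots,x_N\}$ disjoint; a shuffle word is a word (possibly empty) with distinct letters from $\mathcal{A}\cup\mathcal{X}$ in which the letters of each alphabet appear in increasing order of subscripts; $W_{MN}$ is the set of shuffle words ordered by the reflexive-transitive closure of: $w\lessdot w'$ iff $w'$ is obtained from $w$ by deleting a letter of $\mathcal{A}$ or inserting a letter of $\mathcal{X}$; $\hat0=a_1\cdots a_M$, $\hat1=x_1\cdots x_N$. Labeling $\Lambda$: for a maximal chain $c=(\hat0=w^0\lessdot\cdots\lessdot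 w^{M+N}=\hat1)$, $\Lambda_{i+1}(c)$ is: $x_k$ if $w^{i+1}$ is obtained from $w^i$ by inserting $x_k$; $x_k$ if $w^i=u\,x_k\,a_m\,v$, $w^{i+1}=u\,x_k\,v$ and this is the first deletion along $c$, starting from $\hat0$, of a letter located immediately after $x_k$ (type (xa)); $a_j$ if $w^{i+1}$ is obtained by deleting $a_j$ and this is not of type (xa). *)

theory Defs
  imports Main
begin

text \<open>A finite poset is given by a carrier P and an order relation le on it,
  with bottom element z0 and z1 element z1.  Chains are lists.\<close>

definition covers :: "'a set \<Rightarrow> ('a \<Rightarrow> 'a \<Rightarrow> bool) \<Rightarrow> 'a \<Rightarrow> 'a \<Rightarrow> bool" where
  "covers P le x y \<longleftrightarrow> x \<in> P \<and> y \<in> P \<and> le x y \<and> x \<noteq> y \<and>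
     \<not> (\<exists>z\<in>P. le x z \<and> le z y \<and> z \<noteq> x \<and> z \<noteq> y)"

definition cover_chain :: "'a set \<Rightarrow> ('a \<Rightarrow> 'a \<Rightarrow> bool) \<Rightarrow> 'a list \<Rightarrow> bool" where
  "cover_chain P le xs \<longleftrightarrow> xs \<noteq> [] \<and> hd xs \<in> P \<and>
     (\<forall>i. Suc i < length xs \<longrightarrow> covers P le (xs ! i) (xs ! Suc i))"

definition max_chains :: "'a set \<Rightarrow> ('a \<Rightarrow> 'a \<Rightarrow> bool) \<Rightarrow> 'a \<Rightarrow> 'a \<Rightarrow> 'a list set" where
  "max_chains P le z0 z1 =
     {c. cover_chain P le c \<and> hd c = z0 \<and> last c = z1}"

text \<open>A labeling assigns to a maximal chain c and a position r in [1..n] the label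
  Lam c r of the r-th covering step (from c!(r-1) to c!r).\<close>
definition C_labeling ::
  "'a set \<Rightarrow> ('a \<Rightarrow> 'a \<Rightarrow> bool) \<Rightarrow> 'a \<Rightarrow> 'a \<Rightarrow> nat \<Rightarrow> ('a list \<Rightarrow> nat \<Rightarrow> 'l) \<Rightarrow> bool" where
  "C_labeling P le z0 z1 n Lam \<longleftrightarrow>
     (\<forall>c\<in>max_chains P le z0 z1. length c = Suc n) \<and>
     (\<forall>c\<in>max_chains P le z0 z1. \<forall>c'\<in>max_chains P le z0 z1. \<forall>r\<in>{1..n}.
        take (Suc r) c = take (Suc r) c' \<longrightarrow> Lam c r = Lam c' r)"

definition R_star_labeling ::
  "'a set \<Rightarrow> ('a \<Rightarrow> 'a \<Rightarrow> bool) \<Rightarrow> 'a \<Rightarrow> 'a \<Rightarrow> nat \<Rightarrow> ('a list \<Rightarrow> nat \<Rightarrow> 'l::linorder) \<Rightarrow> bool" where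
  "R_star_labeling P le z0 z1 n Lam \<longleftrightarrow>
     C_labeling P le z0 z1 n Lam \<and>
     (\<forall>p u. cover_chain P le p \<and> hd p = z0 \<and> u \<in> P \<and> le (last p) u \<and> last p \<noteq> u \<longrightarrow>
        (\<exists>!q. cover_chain P le q \<and> hd q = last p \<and> last q = u \<and>
           (\<forall>c\<in>max_chains P le z0 z1. take (length p + length q - 1) c = p @ tl q \<longrightarrow>
              (\<forall>j. length p - 1 < j \<and> j < length p + length q - 2 \<longrightarrow>
                  Lam c j < Lam c (Suc j)))))"

datatype letter = A nat | X nat

instantiation letter :: linorder
begin

fun less_eq_letter :: "letter \<Rightarrow> letter \<Rightarrow> bool" where
  "less_eq_letter (A i) (A j) = (i \<le> j)"
| "less_eq_letter (A i) (X j) = True"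
| "less_eq_letter (X i) (A j) = False"
| "less_eq_letter (X i) (X j) = (i \<le> j)"

definition less_letter :: "letter \<Rightarrow> letter \<Rightarrow> bool" where
  "less_letter x y \<longleftrightarrow> x \<le> y \<and> \<not> y \<le> x"

instance
proof
  fix x y z :: letter
  show "(x < y) = (x \<le> y \<and> \<not> y \<le> x)" by (simp add: less_letter_def)
  show "x \<le> x" by (cases x) auto
  show "x \<le> y \<Longrightarrow> y \<le> z \<Longrightarrow> x \<le> z" by (cases x; cases y; cases z) auto
  show "x \<le> y \<Longrightarrow> y \<le> x \<Longrightarrow> x = y" by (cases x; cases y) auto
  show "x \<le> y \<or> y \<le> x" by (cases x; cases y) auto
qed

end

fun is_A :: "letter \<Rightarrow> bool" where
  "is_A (A _) = True" | "is_A (X _) = False"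

fun is_X :: "letter \<Rightarrow> bool" where
  "is_X (A _) = False" | "is_X (X _) = True"

definition shuffle_words :: "nat \<Rightarrow> nat \<Rightarrow> letter list set" where
  "shuffle_words M N = {w. distinct w \<and>
      set w \<subseteq> A ` {1..M} \<union> X ` {1..N} \<and>
      sorted_wrt (<) (filter is_A w) \<and> sorted_wrt (<) (filter is_X w)}"

definition shuffle_step :: "letter list \<Rightarrow> letter list \<Rightarrow> bool" where
  "shuffle_step w w' \<longleftrightarrow>
     (\<exists>u v j. w = u @ A j # v \<and> w' = u @ v) \<or>
     (\<exists>u v k. w = u @ v \<and> w' = u @ X k # v)"

definition shuffle_le :: "nat \<Rightarrow> nat \<Rightarrow> letter list \<Rightarrow> letter list \<Rightarrow> bool" where
  "shuffle_le M N w w' \<longleftrightarrow>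
     (w, w') \<in> {(a, b). a \<in> shuffle_words M N \<and> b \<in> shuffle_words M N \<and> shuffle_step a b}\<^sup>*"

definition shuffle_bot :: "nat \<Rightarrow> letter list" where
  "shuffle_bot M = map A [1..<Suc M]"

definition shuffle_top :: "nat \<Rightarrow> letter list" where
  "shuffle_top N = map X [1..<Suc N]"

definition ins_X :: "nat \<Rightarrow> letter list \<Rightarrow> letter list \<Rightarrow> bool" where
  "ins_X k w w' \<longleftrightarrow> (\<exists>u v. w = u @ v \<and> w' = u @ X k # v)"

definition del_after_X :: "nat \<Rightarrow> letter list \<Rightarrow> letter list \<Rightarrow> bool" where
  "del_after_X k w w' \<longleftrightarrow> (\<exists>u y v. w = u @ X k # y # v \<and> w' = u @ X k # v)"

definition del_A :: "nat \<Rightarrow> letter list \<Rightarrow> letter list \<Rightarrow> bool" where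
  "del_A j w w' \<longleftrightarrow> (\<exists>u v. w = u @ A j # v \<and> w' = u @ v)"

definition type_xa :: "nat \<Rightarrow> letter list list \<Rightarrow> nat \<Rightarrow> bool" where
  "type_xa k c i \<longleftrightarrow>
     (\<exists>u m v. c ! i = u @ X k # A m # v \<and> c ! Suc i = u @ X k # v) \<and>
     (\<forall>j<i. \<not> del_after_X k (c ! j) (c ! Suc j))"

definition shuffle_label :: "letter list list \<Rightarrow> nat \<Rightarrow> letter" where
  "shuffle_label c r =
     (let i = r - 1 in
      if \<exists>k. ins_X k (c ! i) (c ! Suc i) then X (THE k. ins_X k (c ! i) (c ! Suc i))
      else if \<exists>k. type_xa k c i then X (THE k. type_xa k c i)
      else A (THE j. del_A j (c ! i) (c ! Suc i)))"

end

(*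
  The order is a subword condition: z <= u iff u arises from z by deleting a-letters and
  inserting x-letters, the letters common to z and u keeping their relative order.

  Along a chain, the label of a step depends only on the step and on the set S of "spent"
  indices k, those for which a letter directly after x_k has already been deleted. For fixed S
  and z < u, the labels of the first steps z < z1 <= u form an explicit set, and its least
  element is carried by exactly one such step. Taking this step makes the least first label
  strictly larger, whereas after any other first step some first label is at most the label
  just used. Hence a chain from z to u has increasing labels iff every step carries the least
  first label, so every interval contains exactly one increasing chain.
*)

theory Submission
  imports Defs "HOL-Library.Sublist"
begin

section \<open>Lists\<close>

lemma successively_restrict:
  "xs \<noteq> [] \<Longrightarrow> successively (\<lambda>x y. x \<in> W \<and> y \<in> W \<and> R x y) xs \<and> hd xs \<in> W \<longleftrightarrow>
     set xs \<subseteq> W \<and> successively R xs"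
  by (induction xs rule: induct_list012) auto

lemma last_append_tl:
  "xs \<noteq> [] \<Longrightarrow> ys \<noteq> [] \<Longrightarrow> last xs = hd ys \<Longrightarrow> last (xs @ tl ys) = last ys"
  by (cases ys) auto

lemma filter_eq_append_split:
  "filter P xs = ys @ zs \<Longrightarrow> \<exists>xs1 xs2. xs = xs1 @ xs2 \<and> filter P xs1 = ys \<and> filter P xs2 = zs"
proof (induction xs arbitrary: ys)
  case Nil
  then show ?case by simp
next
  case (Cons x xs)
  show ?case
  proof (cases "P x \<and> ys \<noteq> []")
    case True
    with Cons.prems obtain ys' where "ys = x # ys'" "filter P xs = ys' @ zs"
      by (cases ys) auto
    with True Cons.IH show ?thesis
      by (metis append_Cons filter.simps(2))
  next
    case False
    show ?thesis
    proof (cases "P x")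
      case True
      with False Cons.prems show ?thesis
        by (intro exI[of _ "[]"] exI[of _ "x # xs"]) auto
    next
      case not_P: False
      with Cons.prems Cons.IH[of ys] obtain xs1 xs2
        where "xs = xs1 @ xs2" "filter P xs1 = ys" "filter P xs2 = zs"
        by auto
      with not_P show ?thesis
        by (intro exI[of _ "x # xs1"] exI[of _ xs2]) auto
    qed
  qed
qed

lemma distinct_append_Cons_eq:
  assumes "distinct (a @ x # b)" "a @ x # b = c @ x # d"
  shows "a = c \<and> b = d"
proof -
  have "x \<notin> set a" "x \<notin> set b"
    using assms(1) by auto
  from append_Cons_eq_iff[OF this] assms(2) show ?thesis
    by blast
qed

lemma distinct_removed_letter_eq:
  assumes "distinct w" "w = a @ x # b" "w = c @ y # d" "a @ b = c @ d"
  shows "x = y"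
proof (rule ccontr)
  assume "x \<noteq> y"
  with assms(2,3) have "x \<in> set (c @ d)"
    by (metis Un_iff in_set_conv_decomp set_ConsD set_append)
  moreover have "x \<notin> set (a @ b)"
    using assms(1,2) by auto
  ultimately show False
    using assms(4) by simp
qed

lemma sublist_pair_iff: "sublist [x, y] w \<longleftrightarrow> (\<exists>a b. w = a @ x # y # b)"
  by (simp add: sublist_def)

lemma sublist_triple_imp_pairs: "sublist [x, y, z] w \<Longrightarrow> sublist [x, y] w \<and> sublist [y, z] w"
  unfolding sublist_pair_iff by (auto simp: sublist_def) (metis append.assoc append_Cons append_Nil)+

lemma sublist_pair_delete:
  "sublist [x, y] (a @ e # b) \<Longrightarrow> e \<noteq> x \<Longrightarrow> e \<noteq> y \<Longrightarrow> sublist [x, y] (a @ b)"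
proof (induction a)
  case Nil
  then show ?case by (simp add: sublist_Cons_right)
next
  case (Cons a0 a)
  show ?case
  proof (cases "prefix [x, y] (a0 # a @ e # b)")
    case True
    with Cons.prems obtain a' where "a0 = x" "a = y # a'"
      by (cases a) auto
    then show ?thesis by (simp add: sublist_Cons_right)
  next
    case False
    with Cons.prems(1) have "sublist [x, y] (a @ e # b)"
      by (auto simp: sublist_Cons_right)
    with Cons show ?thesis by (simp add: sublist_Cons_right)
  qed
qed

lemma sublist_pair_insert:
  "sublist [x, y] (a @ b) \<Longrightarrow> sublist [x, y] (a @ e # b) \<or> sublist [x, e, y] (a @ e # b)"
proof (induction a)
  case Nil
  then show ?case by (simp add: sublist_Cons_right)
next
  case (Cons a0 a)
  show ?case
  proof (cases "prefix [x, y] (a0 # a @ b)")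
    case True
    then consider "a0 = x" "a = []" "prefix [y] b" | a' where "a0 = x" "a = y # a'"
      by (cases a) auto
    then show ?thesis
    proof cases
      case 1
      then show ?thesis by (auto simp: sublist_Cons_right prefix_def)
    next
      case 2
      then show ?thesis by (simp add: sublist_Cons_right)
    qed
  next
    case False
    with Cons show ?thesis by (auto simp: sublist_Cons_right)
  qed
qed

lemma distinct_sublist_pair_pred:
  assumes "distinct w" "sublist [x, y] w" "sublist [x', y] w"
  shows "x = x'"
proof -
  obtain a b c d where "w = (a @ [x]) @ y # b" "w = (c @ [x']) @ y # d"
    using assms(2,3) unfolding sublist_pair_iff by force
  with assms(1) have "distinct ((a @ [x]) @ y # b)" "(a @ [x]) @ y # b = (c @ [x']) @ y # d"
    by simp_all
  then have "a @ [x] = c @ [x']"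
    by (blast dest: distinct_append_Cons_eq)
  then show ?thesis by simp
qed

lemma distinct_sublist_pair_succ:
  assumes "distinct w" "sublist [x, y] w" "sublist [x, y'] w"
  shows "y = y'"
proof -
  obtain a b c d where w: "w = a @ x # y # b" and w': "w = c @ x # y' # d"
    using assms(2,3) unfolding sublist_pair_iff by blast
  have "distinct (a @ x # y # b)" "a @ x # y # b = c @ x # y' # d"
    using assms(1) w w' by simp_all
  then show ?thesis
    by (blast dest: distinct_append_Cons_eq)
qed

lemma sublist_pair_split:
  assumes "distinct w" "w = a @ d # b" "sublist [x, d] w"
  shows "\<exists>a'. a = a' @ [x]"
proof -
  obtain p s where "w = p @ x # d # s"
    using assms(3) unfolding sublist_pair_iff by blast
  with assms(1,2) have "distinct (a @ d # b)" "a @ d # b = (p @ [x]) @ d # s"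
    by simp_all
  then have "a = p @ [x]"
    by (blast dest: distinct_append_Cons_eq)
  then show ?thesis ..
qed

lemma sublist_pair_split_succ:
  assumes "distinct w" "w = a @ x # b" "sublist [x, y] w"
  shows "\<exists>b'. b = y # b'"
proof -
  obtain p s where "w = p @ x # y # s"
    using assms(3) unfolding sublist_pair_iff by blast
  with assms(1,2) have "distinct (a @ x # b)" "a @ x # b = p @ x # y # s"
    by simp_all
  then have "b = y # s"
    by (blast dest: distinct_append_Cons_eq)
  then show ?thesis ..
qed

section \<open>Letters and shuffle words\<close>

lemma less_letter_simps [simp]:
  "A i < A j \<longleftrightarrow> i < j" "A i < X j" "\<not> X i < A j" "X i < X j \<longleftrightarrow> i < j"
  by (auto simp: less_letter_def)

lemma is_A_less_X: "is_A l \<Longrightarrow> l < X k"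
  by (cases l) auto

lemma shuffle_words_delete:
  assumes "a @ e # b \<in> shuffle_words M N"
  shows "a @ b \<in> shuffle_words M N"
proof -
  have "sorted_wrt (<) (filter P (a @ b))" if "sorted_wrt (<) (filter P (a @ e # b))" for P
    using that by (cases "P e") (simp_all add: sorted_wrt_append)
  with assms show ?thesis
    by (auto simp: shuffle_words_def)
qed

lemma shuffle_words_X_adjacent_less:
  assumes "a @ X k # X k' # b \<in> shuffle_words M N"
  shows "k < k'"
  using assms by (simp add: shuffle_words_def sorted_wrt_append)

lemma shuffle_top_mem: "shuffle_top N \<in> shuffle_words M N"
proof -
  have "filter is_A (map X [1..<Suc N]) = []" "filter is_X (map X [1..<Suc N]) = map X [1..<Suc N]"
    by (induction N) auto
  then show ?thesis
    by (auto simp: shuffle_top_def shuffle_words_def distinct_map inj_on_def sorted_wrt_map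
        simp del: upt_Suc)
qed

lemma shuffle_step_insert: "shuffle_step (a @ b) (a @ X k # b)"
  unfolding shuffle_step_def by blast

lemma shuffle_step_delete: "shuffle_step (a @ A j # b) (a @ b)"
  unfolding shuffle_step_def by blast

section \<open>Rank, coverings and chains\<close>

definition shuffle_rank :: "letter list \<Rightarrow> int" where
  "shuffle_rank w = int (length (filter is_X w)) - int (length (filter is_A w))"

lemma shuffle_rank_step: "shuffle_step w w' \<Longrightarrow> shuffle_rank w' = shuffle_rank w + 1"
  by (auto simp: shuffle_step_def shuffle_rank_def)

lemma shuffle_rank_bot: "shuffle_rank (shuffle_bot M) = - int M"
proof -
  have "filter is_X (map A [1..<Suc M]) = []" "filter is_A (map A [1..<Suc M]) = map A [1..<Suc M]"
    by (induction M) auto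
  then show ?thesis
    by (simp add: shuffle_rank_def shuffle_bot_def)
qed

lemma shuffle_rank_top: "shuffle_rank (shuffle_top N) = int N"
proof -
  have "filter is_A (map X [1..<Suc N]) = []" "filter is_X (map X [1..<Suc N]) = map X [1..<Suc N]"
    by (induction N) auto
  then show ?thesis
    by (simp add: shuffle_rank_def shuffle_top_def)
qed

definition shuffle_rel :: "nat \<Rightarrow> nat \<Rightarrow> (letter list \<times> letter list) set" where
  "shuffle_rel M N = {(a, b). a \<in> shuffle_words M N \<and> b \<in> shuffle_words M N \<and> shuffle_step a b}"

lemma shuffle_le_rtrancl: "shuffle_le M N a b \<longleftrightarrow> (a, b) \<in> (shuffle_rel M N)\<^sup>*"
  by (simp add: shuffle_le_def shuffle_rel_def)

lemma shuffle_le_refl: "shuffle_le M N a a"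
  by (simp add: shuffle_le_rtrancl)

lemma shuffle_le_trans: "shuffle_le M N a b \<Longrightarrow> shuffle_le M N b c \<Longrightarrow> shuffle_le M N a c"
  unfolding shuffle_le_rtrancl by (rule rtrancl_trans)

lemma shuffle_le_step:
  "a \<in> shuffle_words M N \<Longrightarrow> b \<in> shuffle_words M N \<Longrightarrow> shuffle_step a b \<Longrightarrow> shuffle_le M N a b"
  by (simp add: shuffle_le_rtrancl shuffle_rel_def r_into_rtrancl)

lemma shuffle_rank_trancl: "(a, b) \<in> (shuffle_rel M N)\<^sup>+ \<Longrightarrow> shuffle_rank a < shuffle_rank b"
  by (induction rule: trancl_induct) (auto simp: shuffle_rel_def dest: shuffle_rank_step)

lemma shuffle_le_rank: "shuffle_le M N a b \<Longrightarrow> shuffle_rank a \<le> shuffle_rank b"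
  unfolding shuffle_le_rtrancl by (auto simp: rtrancl_eq_or_trancl dest: shuffle_rank_trancl)

lemma shuffle_le_rank_eq: "shuffle_le M N a b \<Longrightarrow> shuffle_rank a = shuffle_rank b \<Longrightarrow> a = b"
  unfolding shuffle_le_rtrancl by (auto simp: rtrancl_eq_or_trancl dest: shuffle_rank_trancl)

lemma covers_shuffle_iff:
  "covers (shuffle_words M N) (shuffle_le M N) x y \<longleftrightarrow>
     x \<in> shuffle_words M N \<and> y \<in> shuffle_words M N \<and> shuffle_step x y"
proof
  assume c: "covers (shuffle_words M N) (shuffle_le M N) x y"
  then have "(x, y) \<in> (shuffle_rel M N)\<^sup>+"
    by (auto simp: covers_def shuffle_le_rtrancl rtrancl_eq_or_trancl)
  then obtain z where xz: "(x, z) \<in> shuffle_rel M N" and zy: "(z, y) \<in> (shuffle_rel M N)\<^sup>*"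
    by (blast dest: tranclD)
  then have "z \<noteq> x" "shuffle_le M N x z" "shuffle_le M N z y"
    by (auto simp: shuffle_rel_def shuffle_le_rtrancl dest: shuffle_rank_step)
  with c xz have "z = y"
    by (auto simp: covers_def shuffle_rel_def)
  with xz show "x \<in> shuffle_words M N \<and> y \<in> shuffle_words M N \<and> shuffle_step x y"
    by (simp add: shuffle_rel_def)
next
  assume a: "x \<in> shuffle_words M N \<and> y \<in> shuffle_words M N \<and> shuffle_step x y"
  then have r: "shuffle_rank y = shuffle_rank x + 1"
    by (simp add: shuffle_rank_step)
  have "z = x \<or> z = y" if "shuffle_le M N x z" "shuffle_le M N z y" for z
    using that r shuffle_le_rank[OF that(1)] shuffle_le_rank[OF that(2)]
      shuffle_le_rank_eq[OF that(1)] shuffle_le_rank_eq[OF that(2)] by fastforce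
  with a r show "covers (shuffle_words M N) (shuffle_le M N) x y"
    by (auto simp: covers_def shuffle_le_step)
qed

definition step_chain :: "nat \<Rightarrow> nat \<Rightarrow> letter list list \<Rightarrow> bool" where
  "step_chain M N q \<longleftrightarrow> q \<noteq> [] \<and> set q \<subseteq> shuffle_words M N \<and> successively shuffle_step q"

lemma cover_chain_shuffle_iff:
  "cover_chain (shuffle_words M N) (shuffle_le M N) q \<longleftrightarrow> step_chain M N q"
proof -
  have "cover_chain (shuffle_words M N) (shuffle_le M N) q \<longleftrightarrow> q \<noteq> [] \<and> hd q \<in> shuffle_words M N \<and>
      successively (\<lambda>x y. x \<in> shuffle_words M N \<and> y \<in> shuffle_words M N \<and> shuffle_step x y) q"
    by (simp add: cover_chain_def successively_conv_nth covers_shuffle_iff)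
  then show ?thesis
    using successively_restrict[of q] by (auto simp: step_chain_def)
qed

lemma max_chains_shuffle_iff:
  "c \<in> max_chains (shuffle_words M N) (shuffle_le M N) (shuffle_bot M) (shuffle_top N) \<longleftrightarrow>
     step_chain M N c \<and> hd c = shuffle_bot M \<and> last c = shuffle_top N"
  by (simp add: max_chains_def cover_chain_shuffle_iff)

lemma step_chain_Cons_Cons:
  "step_chain M N (a # b # r) \<longleftrightarrow> a \<in> shuffle_words M N \<and> shuffle_step a b \<and> step_chain M N (b # r)"
  by (auto simp: step_chain_def)

lemma step_chain_rank:
  "step_chain M N (z # r) \<Longrightarrow> shuffle_rank (last (z # r)) = shuffle_rank z + int (length r)"
  by (induction r arbitrary: z) (auto simp: step_chain_Cons_Cons shuffle_rank_step)

lemma step_chain_le: "step_chain M N (z # r) \<Longrightarrow> shuffle_le M N z (last (z # r))"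
proof (induction r arbitrary: z)
  case Nil
  then show ?case by (simp add: shuffle_le_refl)
next
  case (Cons b r)
  then show ?case
    by (auto simp: step_chain_Cons_Cons step_chain_def
        intro: shuffle_le_trans[OF shuffle_le_step])
qed

lemma step_chain_append:
  assumes "step_chain M N xs" "step_chain M N ys" "last xs = hd ys"
  shows "step_chain M N (xs @ tl ys)"
proof -
  from assms have "xs @ tl ys = butlast xs @ ys"
    by (cases ys; cases xs rule: rev_cases) (auto simp: step_chain_def)
  moreover have "successively shuffle_step (butlast xs @ ys)"
    using assms by (cases xs rule: rev_cases)
      (auto simp: step_chain_def successively_append_iff)
  ultimately show ?thesis
    using assms by (auto simp: step_chain_def dest: in_set_butlastD list.set_sel(2))
qed

lemma step_chain_length_max:
  assumes "step_chain M N c" "hd c = shuffle_bot M" "last c = shuffle_top N"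
  shows "length c = Suc (M + N)"
proof -
  obtain r where c: "c = shuffle_bot M # r"
    using assms by (cases c) (auto simp: step_chain_def)
  with assms step_chain_rank[of M N "shuffle_bot M" r] show ?thesis
    by (simp add: shuffle_rank_bot shuffle_rank_top)
qed

section \<open>The order as a subword condition\<close>

definition shuffle_below :: "nat \<Rightarrow> nat \<Rightarrow> letter list \<Rightarrow> letter list \<Rightarrow> bool" where
  "shuffle_below M N z u \<longleftrightarrow> z \<in> shuffle_words M N \<and> u \<in> shuffle_words M N \<and>
     set u - set z \<subseteq> range X \<and> set z - set u \<subseteq> range A \<and>
     filter (\<lambda>y. y \<in> set u) z = filter (\<lambda>y. y \<in> set z) u"

lemma shuffle_below_words:
  "shuffle_below M N z u \<Longrightarrow> z \<in> shuffle_words M N \<and> u \<in> shuffle_words M N"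
  by (simp add: shuffle_below_def)

lemma shuffle_below_distinct: "shuffle_below M N z u \<Longrightarrow> distinct z \<and> distinct u"
  by (simp add: shuffle_below_def shuffle_words_def)

lemma shuffle_below_refl: "z \<in> shuffle_words M N \<Longrightarrow> shuffle_below M N z z"
  by (simp add: shuffle_below_def)

lemma shuffle_below_new_letter:
  "shuffle_below M N z u \<Longrightarrow> y \<in> set u \<Longrightarrow> y \<notin> set z \<Longrightarrow> \<exists>k. y = X k"
  by (auto simp: shuffle_below_def)

lemma shuffle_below_old_letter:
  "shuffle_below M N z u \<Longrightarrow> y \<in> set z \<Longrightarrow> y \<notin> set u \<Longrightarrow> \<exists>m. y = A m"
  by (auto simp: shuffle_below_def)

lemma shuffle_below_eq: "shuffle_below M N z u \<Longrightarrow> set z = set u \<Longrightarrow> z = u"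
  by (simp add: shuffle_below_def)

lemma shuffle_below_step:
  assumes below: "shuffle_below M N z y" and y': "y' \<in> shuffle_words M N"
    and step: "shuffle_step y y'"
  shows "shuffle_below M N z y'"
  using step unfolding shuffle_step_def
proof (elim disjE exE conjE)
  fix a b j assume y: "y = a @ A j # b" and y'_eq: "y' = a @ b"
  have "distinct y"
    using below by (simp add: shuffle_below_distinct)
  then have set_y': "set y' = set y - {A j}"
    using y y'_eq by auto
  have "filter (\<lambda>w. w \<noteq> A j) a = a" "filter (\<lambda>w. w \<noteq> A j) b = b"
    using \<open>distinct y\<close> y by (auto simp: filter_id_conv)
  then have filter_y: "filter (\<lambda>w. w \<noteq> A j) y = y'"
    using y y'_eq by simp
  have "filter (\<lambda>w. w \<in> set y') z = filter (\<lambda>w. w \<noteq> A j) (filter (\<lambda>w. w \<in> set y) z)"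
       "filter (\<lambda>w. w \<in> set z) y' = filter (\<lambda>w. w \<noteq> A j) (filter (\<lambda>w. w \<in> set z) y)"
    by (simp_all add: filter_filter set_y' conj_commute flip: filter_y)
  with below y' set_y' show ?thesis
    by (auto simp: shuffle_below_def)
next
  fix a b k assume y: "y = a @ b" and y'_eq: "y' = a @ X k # b"
  have "X k \<notin> set y"
    using y' y y'_eq by (auto simp: shuffle_words_def)
  then have "X k \<notin> set z"
    using below by (auto simp: shuffle_below_def)
  then have "filter (\<lambda>w. w \<in> set y') z = filter (\<lambda>w. w \<in> set y) z"
       "filter (\<lambda>w. w \<in> set z) y' = filter (\<lambda>w. w \<in> set z) y"
    by (auto simp: y y'_eq intro: filter_cong)
  with below y' show ?thesis
    by (auto simp: shuffle_below_def y y'_eq)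
qed

lemma shuffle_le_imp_below:
  "shuffle_le M N z u \<Longrightarrow> z \<in> shuffle_words M N \<Longrightarrow> shuffle_below M N z u"
  unfolding shuffle_le_rtrancl
proof (induction rule: rtrancl_induct)
  case base
  then show ?case by (rule shuffle_below_refl)
next
  case (step y y')
  then show ?case by (auto simp: shuffle_rel_def intro: shuffle_below_step)
qed

lemma shuffle_below_delete:
  assumes below: "shuffle_below M N z u" and z: "z = a @ e # b" and e: "e \<notin> set u"
  shows "shuffle_below M N (a @ b) u"
proof -
  have "distinct z"
    using below by (simp add: shuffle_below_distinct)
  then have set_ab: "set (a @ b) = set z - {e}"
    using z by auto
  have "filter (\<lambda>y. y \<in> set u) (a @ b) = filter (\<lambda>y. y \<in> set u) z"
    using e z by simp
  also have "\<dots> = filter (\<lambda>y. y \<in> set z) u"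
    using below by (simp add: shuffle_below_def)
  also have "\<dots> = filter (\<lambda>y. y \<in> set (a @ b)) u"
    unfolding set_ab using e by (auto intro: filter_cong)
  finally have "filter (\<lambda>y. y \<in> set u) (a @ b) = filter (\<lambda>y. y \<in> set (a @ b)) u" .
  moreover have "a @ b \<in> shuffle_words M N"
    using below z shuffle_words_delete by (auto simp: shuffle_below_def)
  ultimately show ?thesis
    using below e unfolding shuffle_below_def set_ab by auto
qed

lemma shuffle_below_insert:
  assumes below: "shuffle_below M N z u" and x_u: "x \<in> set u" and x_z: "x \<notin> set z"
  obtains a b where "z = a @ b" "shuffle_below M N (a @ x # b) u"
proof -
  let ?in_u = "\<lambda>y. y \<in> set u" and ?in_z = "\<lambda>y. y \<in> set z"
  obtain u1 u2 where u: "u = u1 @ x # u2"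
    using x_u by (meson split_list)
  have dist: "distinct z" "distinct u"
    using below by (simp_all add: shuffle_below_distinct)
  \<comment> \<open>x goes between the letters of z that u puts before x and those it puts after x\<close>
  have "filter ?in_u z = filter ?in_z u1 @ filter ?in_z u2"
    using below x_z u by (simp add: shuffle_below_def)
  then obtain a b where z: "z = a @ b"
    and a: "filter ?in_u a = filter ?in_z u1" and b: "filter ?in_u b = filter ?in_z u2"
    using filter_eq_append_split by blast
  let ?z' = "a @ x # b"
  have set_z': "set ?z' = insert x (set z)"
    using z by auto
  have common: "filter ?in_u ?z' = filter (\<lambda>y. y \<in> set ?z') u"
  proof -
    have "x \<notin> set u1" "x \<notin> set u2"
      using dist u by auto
    then have "filter (\<lambda>y. y \<in> set ?z') u1 = filter ?in_z u1"
        "filter (\<lambda>y. y \<in> set ?z') u2 = filter ?in_z u2"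
      unfolding set_z' by (auto intro: filter_cong)
    with a b x_u show ?thesis
      by (simp add: u)
  qed
  obtain k where x: "x = X k"
    using shuffle_below_new_letter[OF below x_u x_z] ..
  have "filter is_X ?z' = filter (\<lambda>y. y \<in> set u \<and> is_X y) ?z'"
    using below x_u set_z' by (intro filter_cong) (auto simp: shuffle_below_def)
  also have "\<dots> = filter is_X (filter ?in_u ?z')"
    by (simp add: filter_filter conj_commute)
  also have "\<dots> = filter is_X (filter (\<lambda>y. y \<in> set ?z') u)"
    by (simp only: common)
  also have "\<dots> = filter (\<lambda>y. y \<in> set ?z') (filter is_X u)"
    by (simp add: filter_filter conj_commute)
  finally have X_part: "filter is_X ?z' = filter (\<lambda>y. y \<in> set ?z') (filter is_X u)" .
  have "sorted_wrt (<) (filter is_X u)"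
    using below by (simp add: shuffle_below_def shuffle_words_def)
  then have "sorted_wrt (<) (filter is_X ?z')"
    unfolding X_part by (rule sorted_wrt_filter)
  moreover have "filter is_A ?z' = filter is_A z"
    using z x by simp
  ultimately have "?z' \<in> shuffle_words M N"
    using below dist x_u x_z z by (auto simp: shuffle_below_def shuffle_words_def)
  moreover have "set u - set ?z' \<subseteq> range X" "set ?z' - set u \<subseteq> range A"
    using below x_u unfolding set_z' shuffle_below_def by auto
  ultimately have "shuffle_below M N ?z' u"
    using shuffle_below_words[OF below] common unfolding shuffle_below_def by blast
  with z that show ?thesis
    by blast
qed

lemma shuffle_below_imp_le: "shuffle_below M N z u \<Longrightarrow> shuffle_le M N z u"
proof (induction "card (set z - set u) + card (set u - set z)" arbitrary: z rule: less_induct)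
  case less
  consider (delete) e where "e \<in> set z" "e \<notin> set u" | (insert) x where "x \<in> set u" "x \<notin> set z"
    | (equal) "set z = set u"
    by blast
  then show ?case
  proof cases
    case delete
    then obtain a b where z: "z = a @ e # b"
      by (meson split_list)
    obtain m where e: "e = A m"
      using shuffle_below_old_letter[OF less.prems delete] ..
    have below': "shuffle_below M N (a @ b) u"
      using shuffle_below_delete[OF less.prems z delete(2)] .
    have "set (a @ b) = set z - {e}"
      using less.prems z by (auto dest: shuffle_below_distinct)
    then have "set (a @ b) - set u = (set z - set u) - {e}" "set u - set (a @ b) = set u - set z"
      using delete by auto
    moreover have "card ((set z - set u) - {e}) < card (set z - set u)"
      using delete by (intro card_Diff1_less) auto
    ultimately have "shuffle_le M N (a @ b) u"
      using less.hyps[OF _ below'] by simp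
    moreover have "shuffle_le M N z (a @ b)"
      using less.prems below' z e
      by (auto simp: shuffle_below_def intro!: shuffle_le_step shuffle_step_delete)
    ultimately show ?thesis
      by (rule shuffle_le_trans[rotated])
  next
    case insert
    obtain a b where z: "z = a @ b" and below': "shuffle_below M N (a @ x # b) u"
      using shuffle_below_insert[OF less.prems insert] .
    obtain k where x: "x = X k"
      using shuffle_below_new_letter[OF less.prems insert] ..
    have "set (a @ x # b) = insert x (set z)"
      using z by auto
    then have "set (a @ x # b) - set u = set z - set u"
      "set u - set (a @ x # b) = (set u - set z) - {x}"
      using insert by auto
    moreover have "card ((set u - set z) - {x}) < card (set u - set z)"
      using insert by (intro card_Diff1_less) auto
    ultimately have "shuffle_le M N (a @ x # b) u"
      using less.hyps[OF _ below'] by simp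
    moreover have "shuffle_le M N z (a @ x # b)"
      using less.prems below' z x
      by (auto simp: shuffle_below_def intro!: shuffle_le_step shuffle_step_insert)
    ultimately show ?thesis
      by (rule shuffle_le_trans[rotated])
  next
    case equal
    then show ?thesis
      using shuffle_below_eq[OF less.prems] by (simp add: shuffle_le_refl)
  qed
qed

lemma shuffle_below_top:
  assumes u: "u \<in> shuffle_words M N"
  shows "shuffle_below M N u (shuffle_top N)"
proof -
  let ?t = "map X [1..<Suc N]"
  have set_t: "set ?t = X ` {1..N}"
    by auto
  have u_letters: "set u \<subseteq> A ` {1..M} \<union> X ` {1..N}"
    using u by (simp add: shuffle_words_def)
  have "filter (\<lambda>y. y \<in> set ?t) u = filter is_X u"
    using u_letters set_t by (auto intro!: filter_cong)
  also have "\<dots> = filter (\<lambda>y. y \<in> set u) ?t"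
  proof (rule sorted_distinct_set_unique)
    show "sorted (filter is_X u)" "distinct (filter is_X u)"
      using u by (simp_all add: shuffle_words_def strict_sorted_iff)
    have "sorted_wrt (<) (filter (\<lambda>y. y \<in> set u) ?t)"
      by (rule sorted_wrt_filter) (simp add: sorted_wrt_map del: upt_Suc)
    then show "sorted (filter (\<lambda>y. y \<in> set u) ?t)" "distinct (filter (\<lambda>y. y \<in> set u) ?t)"
      by (simp_all add: strict_sorted_iff)
    show "set (filter is_X u) = set (filter (\<lambda>y. y \<in> set u) ?t)"
      using u_letters set_t by auto
  qed
  finally show ?thesis
    using u u_letters set_t shuffle_top_mem[of N M]
    by (auto simp: shuffle_below_def shuffle_top_def)
qed

section \<open>Labels of single steps\<close>

definition spend :: "nat set \<Rightarrow> letter list \<Rightarrow> letter list \<Rightarrow> nat set" where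
  "spend S w w' = S \<union> {k. del_after_X k w w'}"

definition spent :: "nat set \<Rightarrow> letter list list \<Rightarrow> nat \<Rightarrow> nat set" where
  "spent S c i = S \<union> {k. \<exists>j<i. del_after_X k (c ! j) (c ! Suc j)}"

definition xa_step :: "nat set \<Rightarrow> nat \<Rightarrow> letter list \<Rightarrow> letter list \<Rightarrow> bool" where
  "xa_step S k w w' \<longleftrightarrow> k \<notin> S \<and> (\<exists>u m v. w = u @ X k # A m # v \<and> w' = u @ X k # v)"

definition step_label :: "nat set \<Rightarrow> letter list \<Rightarrow> letter list \<Rightarrow> letter" where
  "step_label S w w' =
     (if \<exists>k. ins_X k w w' then X (THE k. ins_X k w w')
      else if \<exists>k. xa_step S k w w' then X (THE k. xa_step S k w w')
      else A (THE j. del_A j w w'))"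

lemma shuffle_label_eq_step_label:
  "shuffle_label c (Suc i) = step_label (spent {} c i) (c ! i) (c ! Suc i)"
proof -
  have "type_xa k c i \<longleftrightarrow> xa_step (spent {} c i) k (c ! i) (c ! Suc i)" for k
    by (auto simp: type_xa_def xa_step_def spent_def)
  then show ?thesis
    by (simp add: shuffle_label_def step_label_def)
qed

lemma spent_Suc: "spent S c (Suc i) = spend (spent S c i) (c ! i) (c ! Suc i)"
  by (auto simp: spent_def spend_def less_Suc_eq)

lemma spent_Cons_Cons: "spent S (a # b # r) (Suc i) = spent (spend S a b) (b # r) i"
  by (induction i) (simp_all add: spent_Suc, simp add: spent_def)

lemma spent_cong:
  assumes "\<And>j. j \<le> i \<Longrightarrow> c ! j = c' ! j"
  shows "spent S c i = spent S c' i"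
proof -
  have "del_after_X k (c ! j) (c ! Suc j) \<longleftrightarrow> del_after_X k (c' ! j) (c' ! Suc j)" if "j < i" for j k
    using that assms[of j] assms[of "Suc j"] by simp
  then show ?thesis
    unfolding spent_def by blast
qed

lemma spend_subset:
  assumes "shuffle_step z z1" "S \<subseteq> {k. X k \<in> set z}"
  shows "spend S z z1 \<subseteq> {k. X k \<in> set z1}"
proof -
  have "X k \<in> set z1" if "X k \<in> set z" for k
    using assms(1) that unfolding shuffle_step_def by auto
  moreover have "X k \<in> set z1" if "del_after_X k z z1" for k
    using that unfolding del_after_X_def by auto
  ultimately show ?thesis
    using assms(2) unfolding spend_def by blast
qed

lemma spent_subset:
  "step_chain M N p \<Longrightarrow> i < length p \<Longrightarrow> spent {} p i \<subseteq> {k. X k \<in> set (p ! i)}"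
proof (induction i)
  case 0
  then show ?case by (simp add: spent_def)
next
  case (Suc i)
  then have "shuffle_step (p ! i) (p ! Suc i)"
    by (simp add: step_chain_def successively_nth)
  with Suc show ?case
    unfolding spent_Suc by (simp add: spend_subset)
qed

definition follows_unspent :: "nat set \<Rightarrow> letter list \<Rightarrow> letter \<Rightarrow> bool" where
  "follows_unspent S w d \<longleftrightarrow> (\<exists>k. k \<notin> S \<and> sublist [X k, d] w)"

lemma del_after_X_delete:
  assumes dist: "distinct w" and w: "w = a @ d # b"
  shows "del_after_X k w (a @ b) \<longleftrightarrow> sublist [X k, d] w"
proof
  assume "del_after_X k w (a @ b)"
  then obtain u y v where u: "w = (u @ [X k]) @ y # v" "(u @ [X k]) @ v = a @ b"
    by (auto simp: del_after_X_def)
  then have "y = d"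
    using distinct_removed_letter_eq[OF dist u(1) w] by simp
  with u show "sublist [X k, d] w"
    by (auto simp: sublist_pair_iff)
next
  assume "sublist [X k, d] w"
  then obtain u v where "w = (u @ [X k]) @ d # v"
    by (auto simp: sublist_pair_iff)
  with dist w have "distinct (a @ d # b)" "a @ d # b = (u @ [X k]) @ d # v"
    by simp_all
  then have "a = u @ [X k] \<and> b = v"
    by (rule distinct_append_Cons_eq)
  then show "del_after_X k w (a @ b)"
    using w by (auto simp: del_after_X_def)
qed

lemma spend_insert: "spend S (a @ b) (a @ X k # b) = S"
proof -
  have "\<not> del_after_X j (a @ b) (a @ X k # b)" for j
  proof
    assume "del_after_X j (a @ b) (a @ X k # b)"
    then obtain u y v where "a @ b = u @ X j # y # v" "a @ X k # b = u @ X j # v"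
      by (auto simp: del_after_X_def)
    then have "length (a @ b) = length (u @ X j # y # v)" "length (a @ X k # b) = length (u @ X j # v)"
      by simp_all
    then show False
      by simp
  qed
  then show ?thesis
    by (simp add: spend_def)
qed

lemma spend_delete_plain:
  "distinct w \<Longrightarrow> w = a @ d # b \<Longrightarrow> \<not> follows_unspent S w d \<Longrightarrow> spend S w (a @ b) = S"
  by (auto simp: spend_def del_after_X_delete follows_unspent_def)

lemma spend_delete_fresh:
  assumes dist: "distinct (a @ X k # d # b)"
  shows "spend S (a @ X k # d # b) (a @ X k # b) = insert k S"
proof -
  have "sublist [X k', d] (a @ X k # d # b) \<longleftrightarrow> k' = k" for k'
    using distinct_sublist_pair_pred[OF dist, of "X k'" d "X k"] by (auto simp: sublist_pair_iff)
  then show ?thesis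
    using del_after_X_delete[OF dist, of "a @ [X k]" d b] by (auto simp: spend_def)
qed

lemma step_label_insert:
  assumes "distinct (a @ X k # b)"
  shows "step_label S (a @ b) (a @ X k # b) = X k"
proof -
  have "ins_X k' (a @ b) (a @ X k # b) \<longleftrightarrow> k' = k" for k'
    using assms by (auto simp: ins_X_def dest: distinct_removed_letter_eq[OF assms refl])
  then show ?thesis
    by (simp add: step_label_def)
qed

lemma not_ins_X_delete: "\<not> ins_X k (a @ e # b) (a @ b)"
proof
  assume "ins_X k (a @ e # b) (a @ b)"
  then obtain u v where "a @ e # b = u @ v" "a @ b = u @ X k # v"
    by (auto simp: ins_X_def)
  then have "length (a @ e # b) = length (u @ v)" "length (a @ b) = length (u @ X k # v)"
    by simp_all
  then show False
    by simp
qed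

lemma xa_step_imp_sublist:
  assumes "distinct w" "w = a @ d # b" "xa_step S k w (a @ b)"
  shows "k \<notin> S \<and> sublist [X k, d] w"
proof -
  have "del_after_X k w (a @ b)"
    using assms(3) by (auto simp: xa_step_def del_after_X_def)
  with assms show ?thesis
    by (simp add: del_after_X_delete xa_step_def)
qed

lemma step_label_delete_plain:
  assumes dist: "distinct (a @ A m # b)" and plain: "\<not> follows_unspent S (a @ A m # b) (A m)"
  shows "step_label S (a @ A m # b) (a @ b) = A m"
proof -
  have "\<not> xa_step S k (a @ A m # b) (a @ b)" for k
    using xa_step_imp_sublist[OF dist refl] plain by (auto simp: follows_unspent_def)
  moreover have "del_A j (a @ A m # b) (a @ b) \<longleftrightarrow> j = m" for j
    using distinct_removed_letter_eq[OF dist refl] by (auto simp: del_A_def)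
  ultimately show ?thesis
    by (simp add: step_label_def not_ins_X_delete)
qed

lemma step_label_delete_fresh:
  assumes dist: "distinct (a @ X k # A m # b)" and k: "k \<notin> S"
  shows "step_label S (a @ X k # A m # b) (a @ X k # b) = X k"
proof -
  have "xa_step S k' (a @ X k # A m # b) (a @ X k # b) \<longleftrightarrow> k' = k" for k'
  proof
    assume "xa_step S k' (a @ X k # A m # b) (a @ X k # b)"
    then have "sublist [X k', A m] (a @ X k # A m # b)"
      using xa_step_imp_sublist[where a = "a @ [X k]" and d = "A m" and b = b] dist by simp
    moreover have "sublist [X k, A m] (a @ X k # A m # b)"
      by (auto simp: sublist_pair_iff)
    ultimately show "k' = k"
      using distinct_sublist_pair_pred[OF dist] by blast
  next
    assume "k' = k"
    with k show "xa_step S k' (a @ X k # A m # b) (a @ X k # b)"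
      by (auto simp: xa_step_def)
  qed
  moreover have "\<not> ins_X k' (a @ X k # A m # b) (a @ X k # b)" for k'
    using not_ins_X_delete[where a = "a @ [X k]"] by simp
  ultimately show ?thesis
    by (simp add: step_label_def)
qed

lemma shuffle_step_toward_cases:
  assumes below: "shuffle_below M N z u" and step: "shuffle_step z z1"
    and below1: "shuffle_below M N z1 u"
  obtains (plain) a d b where "z = a @ d # b" "z1 = a @ b" "d \<in> set z - set u"
      "\<not> follows_unspent S z d" "step_label S z z1 = d" "spend S z z1 = S"
    | (fresh) a k d b where "z = a @ X k # d # b" "z1 = a @ X k # b" "d \<in> set z - set u"
      "k \<notin> S" "step_label S z z1 = X k" "spend S z z1 = insert k S"
    | (insert) a k b where "z = a @ b" "z1 = a @ X k # b" "X k \<in> set u - set z"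
      "step_label S z z1 = X k" "spend S z z1 = S"
proof -
  have dist: "distinct z" "distinct z1"
    using below below1 shuffle_below_distinct by blast+
  from step consider (del) a j b where "z = a @ A j # b" "z1 = a @ b"
    | (ins) a k b where "z = a @ b" "z1 = a @ X k # b"
    unfolding shuffle_step_def by blast
  then show ?thesis
  proof cases
    case del
    have "A j \<notin> set z1"
      using dist del by simp
    then have "A j \<notin> set u"
      using shuffle_below_new_letter[OF below1] by blast
    with del have Aj: "A j \<in> set z - set u"
      by simp
    show ?thesis
    proof (cases "follows_unspent S z (A j)")
      case True
      then obtain k where k: "k \<notin> S" "sublist [X k, A j] z"
        by (auto simp: follows_unspent_def)
      then obtain a' where a: "a = a' @ [X k]"
        using sublist_pair_split[OF dist(1) del(1)] by blast
      then show ?thesis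
        using fresh[of a' k "A j" b] del Aj k(1) dist(1)
          step_label_delete_fresh[of a' k j b S] spend_delete_fresh[of a' k "A j" b S] by simp
    next
      case False
      then show ?thesis
        using plain[of a "A j" b] del Aj dist(1)
          step_label_delete_plain[of a j b S] spend_delete_plain[OF dist(1) del(1)] by simp
    qed
  next
    case ins
    have "X k \<in> set u"
      using shuffle_below_old_letter[OF below1, of "X k"] ins by auto
    moreover have "X k \<notin> set z"
      using dist(2) ins by simp
    moreover have "step_label S z z1 = X k"
      using step_label_insert[of a k b S] dist(2) ins by simp
    ultimately show ?thesis
      using insert[of a b k] ins spend_insert by simp
  qed
qed

lemma shuffle_step_toward_new_letter:
  assumes "shuffle_below M N z u" "shuffle_step z z1" "shuffle_below M N z1 u"
  shows "set z1 - set u \<subseteq> set z"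
  using assms by (cases rule: shuffle_step_toward_cases[where S = "{}"]) auto

lemma step_toward_shape:
  assumes "shuffle_below M N z u" "shuffle_step z z1" "shuffle_below M N z1 u"
  shows "(\<exists>m a b. step_label S z z1 = A m \<and> z = a @ A m # b \<and> z1 = a @ b) \<or>
    (\<exists>k a d b. step_label S z z1 = X k \<and> z = a @ X k # d # b \<and> z1 = a @ X k # b) \<or>
    (\<exists>k a b. step_label S z z1 = X k \<and> X k \<notin> set z \<and> z = a @ b \<and> z1 = a @ X k # b)"
  using assms
proof (cases rule: shuffle_step_toward_cases[where S = S])
  case (plain a d b)
  then obtain m where "d = A m"
    using shuffle_below_old_letter[OF assms(1)] by blast
  with plain show ?thesis
    by auto
qed auto

section \<open>The labels of first steps\<close>

definition plain_deletions :: "nat set \<Rightarrow> letter list \<Rightarrow> letter list \<Rightarrow> letter set" where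
  "plain_deletions S z u = {d \<in> set z - set u. \<not> follows_unspent S z d}"

definition x_labels :: "nat set \<Rightarrow> letter list \<Rightarrow> letter list \<Rightarrow> nat set" where
  "x_labels S z u = {k. X k \<in> set u - set z} \<union>
     {k. k \<notin> S \<and> (\<exists>d \<in> set z - set u. sublist [X k, d] z)}"

(* Exactly the labels of the steps from z towards u when the indices in S are spent
   (step_label_mem_first_labels, first_labels_attained). *)
definition first_labels :: "nat set \<Rightarrow> letter list \<Rightarrow> letter list \<Rightarrow> letter set" where
  "first_labels S z u = plain_deletions S z u \<union> X ` x_labels S z u"

definition min_label :: "nat set \<Rightarrow> letter list \<Rightarrow> letter list \<Rightarrow> letter" where
  "min_label S z u = Min (first_labels S z u)"

lemma plain_deletions_is_A:
  "shuffle_below M N z u \<Longrightarrow> d \<in> plain_deletions S z u \<Longrightarrow> \<exists>m. d = A m"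
  by (auto simp: plain_deletions_def dest: shuffle_below_old_letter)

lemma step_label_mem_first_labels:
  assumes "shuffle_below M N z u" "shuffle_step z z1" "shuffle_below M N z1 u"
  shows "step_label S z z1 \<in> first_labels S z u"
  using assms
proof (cases rule: shuffle_step_toward_cases[where S = S])
  case (fresh a k d b)
  then have "sublist [X k, d] z"
    by (auto simp: sublist_pair_iff)
  with fresh show ?thesis
    by (auto simp: first_labels_def x_labels_def)
qed (auto simp: first_labels_def plain_deletions_def x_labels_def)

lemma first_labels_attained:
  assumes below: "shuffle_below M N z u" and l: "l \<in> first_labels S z u"
  obtains z1 where "shuffle_step z z1" "shuffle_below M N z1 u" "step_label S z z1 = l"
proof -
  have dist: "distinct z"
    using below shuffle_below_distinct by blast
  consider (plain) "l \<in> plain_deletions S z u" | (insert) k where "l = X k" "X k \<in> set u - set z"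
    | (fresh) k d where "l = X k" "k \<notin> S" "d \<in> set z - set u" "sublist [X k, d] z"
    using l by (auto simp: first_labels_def x_labels_def)
  then show ?thesis
  proof cases
    case plain
    then have l_z: "l \<in> set z" "l \<notin> set u" and not_fresh: "\<not> follows_unspent S z l"
      by (auto simp: plain_deletions_def)
    obtain m where m: "l = A m"
      using shuffle_below_old_letter[OF below l_z] ..
    obtain a b where z: "z = a @ l # b"
      using l_z(1) by (meson split_list)
    show ?thesis
    proof
      show "shuffle_step z (a @ b)"
        using z m by (simp add: shuffle_step_delete)
      show "shuffle_below M N (a @ b) u"
        using shuffle_below_delete[OF below z l_z(2)] .
      show "step_label S z (a @ b) = l"
        using step_label_delete_plain[of a m b S] dist z m not_fresh by simp
    qed
  next
    case insert
    obtain a b where z: "z = a @ b" and below1: "shuffle_below M N (a @ X k # b) u"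
      using shuffle_below_insert[OF below] insert by blast
    show ?thesis
    proof
      show "shuffle_step z (a @ X k # b)"
        using z by (simp add: shuffle_step_insert)
      have "distinct (a @ X k # b)"
        using shuffle_below_distinct[OF below1] ..
      then show "step_label S z (a @ X k # b) = l"
        using step_label_insert[of a k b S] insert(1) z by simp
    qed (rule below1)
  next
    case fresh
    obtain m where m: "d = A m"
      using shuffle_below_old_letter[OF below] fresh(3) by blast
    obtain a b where z: "z = a @ X k # d # b"
      using fresh(4) unfolding sublist_pair_iff by blast
    show ?thesis
    proof
      show "shuffle_step z (a @ X k # b)"
        using z m shuffle_step_delete[of "a @ [X k]" m b] by simp
      show "shuffle_below M N (a @ X k # b) u"
        using shuffle_below_delete[OF below, of "a @ [X k]" d b] z fresh(3) by simp
      show "step_label S z (a @ X k # b) = l"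
        using step_label_delete_fresh[of a k m b S] dist z m fresh(1,2) by simp
    qed
  qed
qed

lemma finite_first_labels: "finite (first_labels S z u)"
proof -
  have "plain_deletions S z u \<subseteq> set z"
    by (auto simp: plain_deletions_def)
  moreover have "x_labels S z u \<subseteq> X -` (set z \<union> set u)"
    by (auto simp: x_labels_def sublist_pair_iff)
  moreover have "finite (X -` (set z \<union> set u))"
    by (rule finite_vimageI) (auto simp: inj_def)
  ultimately show ?thesis
    unfolding first_labels_def by (meson finite_Un finite_imageI finite_set finite_subset)
qed

lemma first_labels_nonempty:
  assumes below: "shuffle_below M N z u" and "z \<noteq> u"
  shows "first_labels S z u \<noteq> {}"
proof -
  have "set z \<noteq> set u"
    using assms shuffle_below_eq by blast
  then consider (new) y where "y \<in> set u" "y \<notin> set z" | (old) d where "d \<in> set z - set u"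
    by blast
  then show ?thesis
  proof cases
    case new
    then obtain k where "y = X k"
      using shuffle_below_new_letter[OF below] by blast
    with new show ?thesis
      by (auto simp: first_labels_def x_labels_def)
  next
    case old
    then show ?thesis
      by (cases "follows_unspent S z d")
        (auto simp: first_labels_def x_labels_def plain_deletions_def follows_unspent_def)
  qed
qed

lemma min_label_mem:
  "shuffle_below M N z u \<Longrightarrow> z \<noteq> u \<Longrightarrow> min_label S z u \<in> first_labels S z u"
  unfolding min_label_def using finite_first_labels first_labels_nonempty by (rule Min_in)

lemma min_label_le: "l \<in> first_labels S z u \<Longrightarrow> min_label S z u \<le> l"
  unfolding min_label_def using finite_first_labels by (rule Min_le)

lemma min_label_eq_X:
  assumes "shuffle_below M N z u" "min_label S z u = X k0"
  shows "plain_deletions S z u = {}" "\<forall>k\<in>x_labels S z u. k0 \<le> k"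
proof -
  have "X k0 \<le> l" if "l \<in> first_labels S z u" for l
    using min_label_le[OF that] assms(2) by simp
  then show "plain_deletions S z u = {}" "\<forall>k\<in>x_labels S z u. k0 \<le> k"
    using plain_deletions_is_A[OF assms(1)] is_A_less_X by (fastforce simp: first_labels_def)+
qed

lemma min_label_attained:
  assumes "shuffle_below M N z u" "z \<noteq> u"
  obtains z1 where "shuffle_step z z1" "shuffle_below M N z1 u" "step_label S z z1 = min_label S z u"
  using first_labels_attained[OF assms(1) min_label_mem[OF assms]] by blast

section \<open>First labels after a step\<close>

lemma follows_unspent_step:
  assumes below: "shuffle_below M N z u" and step: "shuffle_step z z1"
    and below1: "shuffle_below M N z1 u" and S: "S \<subseteq> {k. X k \<in> set z}"
    and d: "d \<in> set z1" and fresh_d: "follows_unspent S z d"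
  shows "follows_unspent (spend S z z1) z1 d"
proof -
  have dist: "distinct z"
    using below shuffle_below_distinct by blast
  obtain k where k: "k \<notin> S" "sublist [X k, d] z"
    using fresh_d by (auto simp: follows_unspent_def)
  from below step below1 show ?thesis
  proof (cases rule: shuffle_step_toward_cases[where S = S])
    case (plain a e b)
    then obtain m where "e = A m"
      using shuffle_below_old_letter[OF below] by blast
    moreover have "e \<noteq> d"
      using dist d plain(1,2) by auto
    ultimately have "sublist [X k, d] z1"
      using sublist_pair_delete[of "X k" d a e b] k(2) plain(1,2) by simp
    with k(1) plain(6) show ?thesis
      by (auto simp: follows_unspent_def)
  next
    case (fresh a j e b)
    then obtain m where "e = A m"
      using shuffle_below_old_letter[OF below] by blast
    moreover have "e \<noteq> d"
      using dist d fresh(1,2) by auto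
    ultimately have "sublist [X k, d] z1"
      using sublist_pair_delete[of "X k" d "a @ [X j]" e b] k(2) fresh(1,2) by simp
    moreover have "k \<noteq> j"
    proof
      assume "k = j"
      moreover have "sublist [X j, e] z"
        using fresh(1) by (auto simp: sublist_pair_iff)
      ultimately show False
        using distinct_sublist_pair_succ[OF dist] k(2) \<open>e \<noteq> d\<close> by blast
    qed
    ultimately show ?thesis
      using k(1) fresh(6) by (auto simp: follows_unspent_def)
  next
    case (insert a j b)
    then have "j \<notin> S"
      using S by auto
    have "sublist [X k, d] z1 \<or> sublist [X k, X j, d] z1"
      using sublist_pair_insert[of "X k" d a b "X j"] k(2) insert(1,2) by simp
    then have "sublist [X k, d] z1 \<or> sublist [X j, d] z1"
      by (auto dest: sublist_triple_imp_pairs)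
    with k(1) \<open>j \<notin> S\<close> insert(5) show ?thesis
      by (auto simp: follows_unspent_def)
  qed
qed

lemma plain_deletions_step:
  assumes below: "shuffle_below M N z u" and step: "shuffle_step z z1"
    and below1: "shuffle_below M N z1 u" and S: "S \<subseteq> {k. X k \<in> set z}"
  shows "plain_deletions (spend S z z1) z1 u \<subseteq> plain_deletions S z u"
proof
  fix d assume "d \<in> plain_deletions (spend S z z1) z1 u"
  then have d: "d \<in> set z1 - set u" "\<not> follows_unspent (spend S z z1) z1 d"
    by (auto simp: plain_deletions_def)
  then have "d \<in> set z - set u"
    using shuffle_step_toward_new_letter[OF below step below1] by blast
  moreover have "\<not> follows_unspent S z d"
    using follows_unspent_step[OF below step below1 S] d by blast
  ultimately show "d \<in> plain_deletions S z u"
    by (simp add: plain_deletions_def)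
qed

lemma x_labels_plain_step:
  assumes dist: "distinct z" and z: "z = a @ c # b" and c: "c \<in> plain_deletions S z u"
  shows "x_labels S (a @ b) u \<subseteq> x_labels S z u"
proof
  fix k assume "k \<in> x_labels S (a @ b) u"
  then consider (new) "X k \<in> set u - set (a @ b)"
    | (fresh) d where "k \<notin> S" "d \<in> set (a @ b) - set u" "sublist [X k, d] (a @ b)"
    by (auto simp: x_labels_def)
  then show "k \<in> x_labels S z u"
  proof cases
    case new
    moreover have "c \<notin> set u"
      using c by (simp add: plain_deletions_def)
    ultimately show ?thesis
      using z by (auto simp: x_labels_def)
  next
    case fresh
    have "sublist [X k, d] z \<or> sublist [X k, c, d] z"
      using sublist_pair_insert[OF fresh(3), of c] z by simp
    moreover have "\<not> sublist [X k, c] z"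
      using c fresh(1) by (auto simp: plain_deletions_def follows_unspent_def)
    ultimately have "sublist [X k, d] z"
      by (auto dest: sublist_triple_imp_pairs)
    with fresh(1,2) z show ?thesis
      by (auto simp: x_labels_def)
  qed
qed

lemma x_labels_fresh_step:
  assumes dist: "distinct z" and z: "z = a @ X k0 # e # b" and e: "e \<notin> set u"
  shows "x_labels (insert k0 S) (a @ X k0 # b) u \<subseteq> x_labels S z u - {k0}"
proof
  fix k assume "k \<in> x_labels (insert k0 S) (a @ X k0 # b) u"
  then consider (new) "X k \<in> set u - set (a @ X k0 # b)"
    | (fresh) d where "k \<notin> insert k0 S" "d \<in> set (a @ X k0 # b) - set u"
      "sublist [X k, d] (a @ X k0 # b)"
    by (auto simp: x_labels_def)
  then show "k \<in> x_labels S z u - {k0}"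
  proof cases
    case new
    with e z show ?thesis
      by (auto simp: x_labels_def)
  next
    case fresh
    have "sublist [X k, d] z \<or> sublist [X k, e, d] z"
      using sublist_pair_insert[of "X k" d "a @ [X k0]" b e] fresh(3) z by simp
    moreover have "\<not> sublist [X k, e] z"
    proof
      assume "sublist [X k, e] z"
      moreover have "sublist [X k0, e] z"
        using z by (auto simp: sublist_pair_iff)
      ultimately show False
        using distinct_sublist_pair_pred[OF dist] fresh(1) by blast
    qed
    ultimately have "sublist [X k, d] z"
      by (auto dest: sublist_triple_imp_pairs)
    with fresh(1,2) z show ?thesis
      by (auto simp: x_labels_def)
  qed
qed

lemma x_labels_insert_step:
  assumes below: "shuffle_below M N z u" and z: "z = a @ b"
    and below1: "shuffle_below M N (a @ X k0 # b) u"
    and no_plain: "plain_deletions S z u = {}" and least: "\<forall>k\<in>x_labels S z u. k0 \<le> k"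
  shows "x_labels S (a @ X k0 # b) u \<subseteq> x_labels S z u - {k0}"
proof
  let ?z1 = "a @ X k0 # b"
  have dist: "distinct z" "distinct ?z1"
    using below below1 shuffle_below_distinct by blast+
  have x_u: "X k0 \<in> set u"
    using shuffle_below_old_letter[OF below1, of "X k0"] by auto
  fix k assume "k \<in> x_labels S ?z1 u"
  then consider (new) "X k \<in> set u - set ?z1"
    | (fresh) d where "k \<notin> S" "d \<in> set ?z1 - set u" "sublist [X k, d] ?z1"
    by (auto simp: x_labels_def)
  then show "k \<in> x_labels S z u - {k0}"
  proof cases
    case new
    with z show ?thesis
      by (auto simp: x_labels_def)
  next
    case fresh
    have d: "d \<in> set z - set u"
      using fresh(2) x_u z by auto
    show ?thesis
    proof (cases "k = k0")
      case True
      obtain b' where b: "b = d # b'"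
        using sublist_pair_split_succ[OF dist(2) refl] fresh(3) True by blast
      have "follows_unspent S z d"
        using no_plain d by (auto simp: plain_deletions_def)
      then obtain k' where k': "k' \<notin> S" "sublist [X k', d] z"
        by (auto simp: follows_unspent_def)
      then have "k0 \<le> k'"
        using least d by (auto simp: x_labels_def)
      obtain a' where "a = a' @ [X k']"
        using sublist_pair_split[OF dist(1), of a d b'] k'(2) z b by auto
      then have "a' @ X k' # X k0 # d # b' \<in> shuffle_words M N"
        using shuffle_below_words[OF below1] b by simp
      then have "k' < k0"
        by (rule shuffle_words_X_adjacent_less)
      with \<open>k0 \<le> k'\<close> show ?thesis
        by simp
    next
      case False
      have "X k0 \<noteq> d"
        using d x_u by auto
      then have "sublist [X k, d] z"
        using sublist_pair_delete[of "X k" d a "X k0" b] fresh(3) False z by simp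
      with fresh(1) d False show ?thesis
        by (auto simp: x_labels_def)
    qed
  qed
qed

lemma first_labels_after_min_step:
  assumes below: "shuffle_below M N z u" and ne: "z \<noteq> u" and S: "S \<subseteq> {k. X k \<in> set z}"
    and step: "shuffle_step z z1" and below1: "shuffle_below M N z1 u"
    and min: "step_label S z z1 = min_label S z u"
  shows "first_labels (spend S z z1) z1 u \<subseteq> first_labels S z u - {min_label S z u}"
proof -
  have dist: "distinct z" "distinct z1"
    using below below1 shuffle_below_distinct by blast+
  have plain1: "plain_deletions (spend S z z1) z1 u \<subseteq> plain_deletions S z u"
    using plain_deletions_step[OF below step below1 S] .
  have plain_A: "\<exists>m. d = A m" if "d \<in> plain_deletions S z u" for d
    using plain_deletions_is_A[OF below that] .
  from below step below1 show ?thesis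
  proof (cases rule: shuffle_step_toward_cases[where S = S])
    case (plain a c b)
    then have "c \<in> plain_deletions S z u"
      by (simp add: plain_deletions_def)
    then have "x_labels S z1 u \<subseteq> x_labels S z u"
      using x_labels_plain_step[OF dist(1) plain(1)] plain(2) by simp
    moreover have "c \<notin> plain_deletions S z1 u"
      using dist(1) plain(1,2) by (simp add: plain_deletions_def)
    moreover have "c \<notin> X ` x_labels S z u"
      using plain_A \<open>c \<in> plain_deletions S z u\<close> by auto
    moreover have min_c: "min_label S z u = c"
      using plain(5) min by simp
    ultimately show ?thesis
      unfolding first_labels_def plain(6) min_c using plain1[unfolded plain(6)] by blast
  next
    case (fresh a k0 e b)
    then have "x_labels (spend S z z1) z1 u \<subseteq> x_labels S z u - {k0}"
      using x_labels_fresh_step[OF dist(1) fresh(1)] by simp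
    moreover have "X k0 \<notin> plain_deletions S z u"
      using plain_A by blast
    ultimately show ?thesis
      using plain1 fresh(5) min by (auto simp: first_labels_def)
  next
    case (insert a k0 b)
    have "min_label S z u = X k0"
      using min insert(4) by simp
    note no_plain = min_label_eq_X(1)[OF below this] and least = min_label_eq_X(2)[OF below this]
    have "x_labels S z1 u \<subseteq> x_labels S z u - {k0}"
      using x_labels_insert_step[OF below insert(1) _ no_plain least] below1 insert(2) by simp
    then show ?thesis
      using plain1 no_plain insert(4,5) min by (auto simp: first_labels_def)
  qed
qed

lemma min_label_increases:
  assumes "shuffle_below M N z u" "z \<noteq> u" "S \<subseteq> {k. X k \<in> set z}"
    and "shuffle_step z z1" "shuffle_below M N z1 u" "step_label S z z1 = min_label S z u"
    and "z1 \<noteq> u"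
  shows "min_label S z u < min_label (spend S z z1) z1 u"
proof -
  have "min_label (spend S z z1) z1 u \<in> first_labels S z u - {min_label S z u}"
    using first_labels_after_min_step[OF assms(1-6)] min_label_mem[OF assms(5,7)] by blast
  then have "min_label S z u \<le> min_label (spend S z z1) z1 u"
    "min_label (spend S z z1) z1 u \<noteq> min_label S z u"
    using min_label_le by blast+
  then show ?thesis
    by simp
qed

lemma newly_following_unspent_imp_label:
  assumes below: "shuffle_below M N z u" and step: "shuffle_step z z1"
    and below1: "shuffle_below M N z1 u" and c: "c \<in> plain_deletions S z u"
    and k: "k \<notin> spend S z z1" "sublist [X k, c] z1"
  shows "step_label S z z1 = X k"
proof -
  have c_z: "\<not> sublist [X k', c] z" if "k' \<notin> S" for k'
    using c that by (auto simp: plain_deletions_def follows_unspent_def)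
  have c_u: "c \<notin> set u"
    using c by (simp add: plain_deletions_def)
  have dist: "distinct z"
    using below shuffle_below_distinct by blast
  from below step below1 show ?thesis
  proof (cases rule: shuffle_step_toward_cases[where S = S])
    case (plain a d b)
    then have "sublist [X k, c] z \<or> sublist [X k, d, c] z"
      using sublist_pair_insert[of "X k" c a b d] k(2) by simp
    moreover have "\<not> sublist [X k, d] z"
      using plain(4) k(1) plain(6) by (auto simp: follows_unspent_def)
    ultimately show ?thesis
      using c_z k(1) plain(6) by (auto dest: sublist_triple_imp_pairs)
  next
    case (fresh a j e b)
    then have "sublist [X k, c] z \<or> sublist [X k, e, c] z"
      using sublist_pair_insert[of "X k" c "a @ [X j]" b e] k(2) by simp
    then have "sublist [X k, e] z"
      using c_z k(1) fresh(6) by (auto dest: sublist_triple_imp_pairs)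
    moreover have "sublist [X j, e] z"
      using fresh(1) by (auto simp: sublist_pair_iff)
    ultimately have "k = j"
      using distinct_sublist_pair_pred[OF dist] by blast
    then show ?thesis
      using k(1) fresh(6) by simp
  next
    case (insert a j b)
    show ?thesis
    proof (rule ccontr)
      assume "step_label S z z1 \<noteq> X k"
      with insert(4) have "X j \<noteq> X k"
        by simp
      moreover have "X j \<noteq> c"
        using insert(3) c_u by auto
      ultimately have "sublist [X k, c] z"
        using sublist_pair_delete[of "X k" c a "X j" b] k(2) insert(1,2) by simp
      with c_z k(1) insert(5) show False
        by simp
    qed
  qed
qed

lemma plain_deletion_survives_step:
  assumes below: "shuffle_below M N z u" and step: "shuffle_step z z1"
    and below1: "shuffle_below M N z1 u" and c: "c \<in> plain_deletions S z u"
    and label: "step_label S z z1 \<noteq> c"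
  shows "c \<in> first_labels (spend S z z1) z1 u \<or> step_label S z z1 \<in> first_labels (spend S z z1) z1 u"
proof -
  have c_zu: "c \<in> set z - set u" and c_plain: "\<not> follows_unspent S z c"
    using c by (auto simp: plain_deletions_def)
  have "c \<in> set z1"
    using below step below1
  proof (cases rule: shuffle_step_toward_cases[where S = S])
    case (plain a d b)
    with c_zu label show ?thesis
      by auto
  next
    case (fresh a k d b)
    then have "follows_unspent S z d"
      by (auto simp: follows_unspent_def sublist_pair_iff)
    with c_plain fresh(1,2) c_zu show ?thesis
      by auto
  qed (use c_zu in auto)
  show ?thesis
  proof (cases "follows_unspent (spend S z z1) z1 c")
    case False
    with \<open>c \<in> set z1\<close> c_zu show ?thesis
      by (auto simp: first_labels_def plain_deletions_def)
  next
    case True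
    then obtain k where k: "k \<notin> spend S z z1" "sublist [X k, c] z1"
      by (auto simp: follows_unspent_def)
    then have "step_label S z z1 = X k"
      by (rule newly_following_unspent_imp_label[OF below step below1 c])
    moreover have "k \<in> x_labels (spend S z z1) z1 u"
      using k \<open>c \<in> set z1\<close> c_zu by (auto simp: x_labels_def)
    ultimately show ?thesis
      by (auto simp: first_labels_def)
  qed
qed

lemma unspent_x_label_survives_step:
  assumes below: "shuffle_below M N z u" and step: "shuffle_step z z1"
    and below1: "shuffle_below M N z1 u" and S: "S \<subseteq> {k. X k \<in> set z}"
    and k0_S: "k0 \<notin> S" and d: "d \<in> set z - set u" "sublist [X k0, d] z"
    and label: "step_label S z z1 \<noteq> X k0"
  shows "X k0 \<in> first_labels (spend S z z1) z1 u \<or>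
    step_label S z z1 \<in> first_labels (spend S z z1) z1 u"
proof -
  have dist: "distinct z"
    using below shuffle_below_distinct by blast
  have k0_first: "X k0 \<in> first_labels (spend S z z1) z1 u"
    if "sublist [X k0, d] z1" "d \<in> set z1" "k0 \<notin> spend S z z1"
    using that d(1) by (auto simp: first_labels_def x_labels_def)
  from below step below1 show ?thesis
  proof (cases rule: shuffle_step_toward_cases[where S = S])
    case (plain a e b)
    have "e \<noteq> d"
      using plain(4) k0_S d(2) by (auto simp: follows_unspent_def)
    moreover have "e \<noteq> X k0"
      using plain(3) shuffle_below_old_letter[OF below] by fastforce
    ultimately have "sublist [X k0, d] z1"
      using sublist_pair_delete[of "X k0" d a e b] d(2) plain(1,2) by simp
    with \<open>e \<noteq> d\<close> plain(1,2,6) d(1) k0_S show ?thesis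
      by (intro disjI1 k0_first) auto
  next
    case (fresh a j e b)
    have "j \<noteq> k0"
      using label fresh(5) by simp
    have "e \<noteq> d"
    proof
      assume "e = d"
      then have "sublist [X j, d] z"
        using fresh(1) by (auto simp: sublist_pair_iff)
      with d(2) \<open>j \<noteq> k0\<close> show False
        using distinct_sublist_pair_pred[OF dist] by blast
    qed
    moreover have "e \<noteq> X k0"
      using fresh(3) shuffle_below_old_letter[OF below] by fastforce
    ultimately have "sublist [X k0, d] z1"
      using sublist_pair_delete[of "X k0" d "a @ [X j]" e b] d(2) fresh(1,2) by simp
    with \<open>e \<noteq> d\<close> \<open>j \<noteq> k0\<close> fresh(1,2,6) d(1) k0_S show ?thesis
      by (intro disjI1 k0_first) auto
  next
    case (insert a j b)
    have "sublist [X k0, d] z1 \<or> sublist [X k0, X j, d] z1"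
      using sublist_pair_insert[of "X k0" d a b "X j"] d(2) insert(1,2) by simp
    then show ?thesis
    proof
      assume "sublist [X k0, d] z1"
      with insert(1,2,5) d(1) k0_S show ?thesis
        by (intro disjI1 k0_first) auto
    next
      assume "sublist [X k0, X j, d] z1"
      then have "sublist [X j, d] z1"
        by (auto dest: sublist_triple_imp_pairs)
      moreover have "j \<notin> S"
        using S insert(3) by auto
      ultimately have "j \<in> x_labels (spend S z z1) z1 u"
        using insert(1,2,5) d(1) by (auto simp: x_labels_def)
      with insert(4) show ?thesis
        by (auto simp: first_labels_def)
    qed
  qed
qed

lemma x_label_survives_step:
  assumes below: "shuffle_below M N z u" and step: "shuffle_step z z1"
    and below1: "shuffle_below M N z1 u" and S: "S \<subseteq> {k. X k \<in> set z}"
    and k0: "k0 \<in> x_labels S z u" and label: "step_label S z z1 \<noteq> X k0"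
  shows "X k0 \<in> first_labels (spend S z z1) z1 u \<or>
    step_label S z z1 \<in> first_labels (spend S z z1) z1 u"
proof -
  have "X k0 \<notin> set z1" if "X k0 \<in> set u - set z"
    using below step below1
  proof (cases rule: shuffle_step_toward_cases[where S = S])
    case (insert a j b)
    with that label show ?thesis
      by auto
  qed (use that in auto)
  then have new: ?thesis if "X k0 \<in> set u - set z"
    using that by (auto simp: first_labels_def x_labels_def)
  from k0 new unspent_x_label_survives_step[OF below step below1 S _ _ _ label] show ?thesis
    by (auto simp: x_labels_def)
qed

lemma first_label_survives_step:
  assumes "shuffle_below M N z u" "shuffle_step z z1" "shuffle_below M N z1 u"
    and "S \<subseteq> {k. X k \<in> set z}" and l: "l \<in> first_labels S z u" and "step_label S z z1 \<noteq> l"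
  shows "l \<in> first_labels (spend S z z1) z1 u \<or>
    step_label S z z1 \<in> first_labels (spend S z z1) z1 u"
proof -
  from l consider (plain) "l \<in> plain_deletions S z u" | (x) k0 where "l = X k0" "k0 \<in> x_labels S z u"
    unfolding first_labels_def by blast
  then show ?thesis
  proof cases
    case plain
    then show ?thesis
      using plain_deletion_survives_step[OF assms(1-3) _ assms(6)] by blast
  next
    case x
    then show ?thesis
      using x_label_survives_step[OF assms(1-4), of k0] assms(6) by blast
  qed
qed

lemma min_label_after_step_le:
  assumes "shuffle_below M N z u" "z \<noteq> u" "S \<subseteq> {k. X k \<in> set z}"
    and "shuffle_step z z1" "shuffle_below M N z1 u" "step_label S z z1 \<noteq> min_label S z u"
  shows "min_label (spend S z z1) z1 u \<le> step_label S z z1"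
proof -
  have "min_label S z u \<le> step_label S z z1"
    using step_label_mem_first_labels[OF assms(1,4,5)] by (rule min_label_le)
  with first_label_survives_step[OF assms(1,4,5,3) min_label_mem[OF assms(1,2)] assms(6)]
  show ?thesis
    using min_label_le order_trans by blast
qed

lemma insert_position_unique:
  assumes below: "shuffle_below M N z u" and x: "X k0 \<notin> set z"
    and no_plain: "plain_deletions S z u = {}" and least: "\<forall>k\<in>x_labels S z u. k0 \<le> k"
    and z: "z = a @ b" "z = a' @ b'"
    and below1: "shuffle_below M N (a @ X k0 # b) u" and below2: "shuffle_below M N (a' @ X k0 # b') u"
  shows "length a \<ge> length a'"
proof (rule ccontr)
  assume "\<not> length a \<ge> length a'"
  moreover obtain us where "a = a' @ us \<and> us @ b = b' \<or> a @ us = a' \<and> b = us @ b'"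
    using z append_eq_append_conv2[of a b a' b'] by auto
  ultimately have "a' = a @ us" "b = us @ b'" "us \<noteq> []"
    by auto
  then obtain e m where a': "a' = a @ e # m" and b: "b = e # m @ b'"
    by (cases us) auto
  have dist: "distinct z"
    using below shuffle_below_distinct by blast
  have "X k0 \<in> set u"
    using shuffle_below_old_letter[OF below1, of "X k0"] by auto
  have e_z: "e \<in> set z" and "e \<noteq> X k0"
    using z(1) b x by auto
  let ?w1 = "a @ X k0 # e # m @ b'" and ?w2 = "a @ e # m @ X k0 # b'"
  have w: "a @ X k0 # b = ?w1" "a' @ X k0 # b' = ?w2"
    using a' b by simp_all
  have "filter (\<lambda>y. y \<in> set u) ?w1 = filter (\<lambda>y. y \<in> set ?w1) u"
    using below1 unfolding w shuffle_below_def by blast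
  also have "\<dots> = filter (\<lambda>y. y \<in> set ?w2) u"
    by (rule filter_cong) auto
  also have "\<dots> = filter (\<lambda>y. y \<in> set u) ?w2"
    using below2 unfolding w shuffle_below_def by argo
  finally have "e \<notin> set u"
    using \<open>X k0 \<in> set u\<close> \<open>e \<noteq> X k0\<close> by auto
  then have "follows_unspent S z e"
    using no_plain e_z by (auto simp: plain_deletions_def)
  then obtain k where k: "k \<notin> S" "sublist [X k, e] z"
    by (auto simp: follows_unspent_def)
  then have "k0 \<le> k"
    using least e_z \<open>e \<notin> set u\<close> by (auto simp: x_labels_def)
  obtain a'' where "a = a'' @ [X k]"
    using sublist_pair_split[OF dist, of a e "m @ b'"] k(2) z(1) b by auto
  then have "a'' @ X k # X k0 # b \<in> shuffle_words M N"
    using shuffle_below_words[OF below1] by simp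
  then have "k < k0"
    by (rule shuffle_words_X_adjacent_less)
  with \<open>k0 \<le> k\<close> show False
    by simp
qed

lemma min_label_insertions_eq:
  assumes below: "shuffle_below M N z u" and min: "min_label S z u = X k0" and x: "X k0 \<notin> set z"
    and z: "z = a1 @ b1" "z = a2 @ b2"
    and below1: "shuffle_below M N (a1 @ X k0 # b1) u" and below2: "shuffle_below M N (a2 @ X k0 # b2) u"
  shows "a1 @ X k0 # b1 = a2 @ X k0 # b2"
proof -
  note bounds = min_label_eq_X[OF below min]
  have "length a1 = length a2"
    using insert_position_unique[OF below x bounds z below1 below2]
      insert_position_unique[OF below x bounds z(2,1) below2 below1] by simp
  with z show ?thesis
    by (simp add: append_eq_append_conv)
qed

lemma min_label_step_unique:
  assumes below: "shuffle_below M N z u" and ne: "z \<noteq> u"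
    and step1: "shuffle_step z z1" "shuffle_below M N z1 u"
    and step2: "shuffle_step z z2" "shuffle_below M N z2 u"
    and label1: "step_label S z z1 = min_label S z u"
    and label2: "step_label S z z2 = min_label S z u"
  shows "z1 = z2"
proof -
  have dist: "distinct z"
    using below shuffle_below_distinct by blast
  note shape1 = step_toward_shape[OF below step1, of S] and shape2 = step_toward_shape[OF below step2, of S]
  show ?thesis
  proof (cases "min_label S z u")
    case (A m)
    have "\<exists>a b. z = a @ A m # b \<and> z1 = a @ b" "\<exists>a b. z = a @ A m # b \<and> z2 = a @ b"
      using shape1 shape2 label1 label2 A by auto
    then obtain a1 b1 a2 b2 where
      z: "z = a1 @ A m # b1" "z1 = a1 @ b1" "z = a2 @ A m # b2" "z2 = a2 @ b2"
      by blast
    have "a1 = a2 \<and> b1 = b2"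
      using distinct_append_Cons_eq[OF dist[unfolded z(1)] trans[OF sym[OF z(1)] z(3)]] .
    with z show ?thesis
      by simp
  next
    case (X k0)
    show ?thesis
    proof (cases "X k0 \<in> set z")
      case True
      have "\<exists>a d b. z = a @ X k0 # d # b \<and> z1 = a @ X k0 # b"
        "\<exists>a d b. z = a @ X k0 # d # b \<and> z2 = a @ X k0 # b"
        using shape1 shape2 label1 label2 X True by auto
      then obtain a1 d1 b1 a2 d2 b2 where
        z: "z = a1 @ X k0 # d1 # b1" "z1 = a1 @ X k0 # b1"
          "z = a2 @ X k0 # d2 # b2" "z2 = a2 @ X k0 # b2"
        by blast
      have "a1 = a2 \<and> d1 # b1 = d2 # b2"
        using distinct_append_Cons_eq[OF dist[unfolded z(1)] trans[OF sym[OF z(1)] z(3)]] .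
      with z show ?thesis
        by simp
    next
      case False
      have "\<exists>a b. z = a @ b \<and> z' = a @ X k0 # b"
        if "shuffle_step z z'" "shuffle_below M N z' u" "step_label S z z' = X k0" for z'
        using step_toward_shape[OF below that(1,2), of S]
      proof (elim disjE exE conjE)
        fix k a d b assume "step_label S z z' = X k" "z = a @ X k # d # b"
        with that(3) False show ?thesis
          by simp
      qed (use that(3) in auto)
      then have "\<exists>a b. z = a @ b \<and> z1 = a @ X k0 # b" "\<exists>a b. z = a @ b \<and> z2 = a @ X k0 # b"
        using step1 step2 label1 label2 X by simp_all
      then obtain a1 b1 a2 b2 where
        z: "z = a1 @ b1" "z1 = a1 @ X k0 # b1" "z = a2 @ b2" "z2 = a2 @ X k0 # b2"
        by blast
      then show ?thesis
        using min_label_insertions_eq[OF below X False z(1,3)] step1(2) step2(2) by simp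
    qed
  qed
qed

section \<open>Increasing chains\<close>

fun chain_labels :: "nat set \<Rightarrow> letter list list \<Rightarrow> letter list" where
  "chain_labels S (w # w' # ws) = step_label S w w' # chain_labels (spend S w w') (w' # ws)"
| "chain_labels S _ = []"

lemma length_chain_labels: "length (chain_labels S q) = length q - 1"
  by (induction S q rule: chain_labels.induct) auto

lemma chain_labels_nth:
  "Suc i < length q \<Longrightarrow> chain_labels S q ! i = step_label (spent S q i) (q ! i) (q ! Suc i)"
proof (induction S q arbitrary: i rule: chain_labels.induct)
  case (1 S w w' ws)
  show ?case
  proof (cases i)
    case 0
    then show ?thesis by (simp add: spent_def)
  next
    case (Suc j)
    with "1" show ?thesis by (simp add: spent_Cons_Cons)
  qed
qed auto

lemma step_chain_below:
  assumes "step_chain M N (z # r)"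
  shows "shuffle_below M N z (last (z # r))"
  using shuffle_le_imp_below[OF step_chain_le[OF assms]] assms by (simp add: step_chain_def)

lemma increasing_chain_first_label:
  assumes "step_chain M N (z # z1 # r)" "successively (<) (chain_labels S (z # z1 # r))"
    and "S \<subseteq> {k. X k \<in> set z}"
  shows "step_label S z z1 = min_label S z (last (z1 # r))"
  using assms
proof (induction r arbitrary: z z1 S)
  case Nil
  then have z: "z \<in> shuffle_words M N" "z1 \<in> shuffle_words M N" and step: "shuffle_step z z1"
    by (auto simp: step_chain_def)
  then have below: "shuffle_below M N z z1"
    by (simp add: shuffle_le_imp_below shuffle_le_step)
  moreover have "z \<noteq> z1"
    using shuffle_rank_step[OF step] by auto
  ultimately obtain z1' where step': "shuffle_step z z1'" "shuffle_below M N z1' z1"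
    and label: "step_label S z z1' = min_label S z z1"
    by (rule min_label_attained)
  have "shuffle_rank z1' = shuffle_rank z1"
    using shuffle_rank_step[OF step] shuffle_rank_step[OF step'(1)] by simp
  then have "z1' = z1"
    using shuffle_le_rank_eq shuffle_below_imp_le[OF step'(2)] by blast
  with label show ?case
    by simp
next
  case (Cons z2 r)
  let ?u = "last (z2 # r)" and ?S1 = "spend S z z1"
  have step: "shuffle_step z z1" and chain1: "step_chain M N (z1 # z2 # r)"
    using Cons.prems(1) by (simp_all add: step_chain_Cons_Cons)
  have less: "step_label S z z1 < step_label ?S1 z1 z2"
    and incr1: "successively (<) (chain_labels ?S1 (z1 # z2 # r))"
    using Cons.prems(2) by simp_all
  have "step_label ?S1 z1 z2 = min_label ?S1 z1 ?u"
    using Cons.IH[OF chain1 incr1 spend_subset[OF step Cons.prems(3)]] by simp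
  moreover have below: "shuffle_below M N z ?u" and below1: "shuffle_below M N z1 ?u"
    using step_chain_below[OF Cons.prems(1)] step_chain_below[OF chain1] by simp_all
  moreover have "z \<noteq> ?u" "z1 \<noteq> ?u"
    using step_chain_rank[OF Cons.prems(1)] step_chain_rank[OF chain1] by auto
  ultimately show ?case
    using min_label_after_step_le[OF below _ Cons.prems(3) step below1] less by fastforce
qed

lemma increasing_chains_second_eq:
  assumes chains: "step_chain M N (z # z1 # r)" "step_chain M N (z # z1' # r')"
    and last: "last (z1' # r') = last (z1 # r)"
    and incr: "successively (<) (chain_labels S (z # z1 # r))"
      "successively (<) (chain_labels S (z # z1' # r'))"
    and S: "S \<subseteq> {k. X k \<in> set z}"
  shows "z1 = z1'"
proof -
  let ?u = "last (z1 # r)"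
  have chains1: "step_chain M N (z1 # r)" "step_chain M N (z1' # r')"
    using chains by (simp_all add: step_chain_Cons_Cons)
  show ?thesis
  proof (rule min_label_step_unique)
    show "shuffle_below M N z ?u"
      using step_chain_below[OF chains(1)] by simp
    show "z \<noteq> ?u"
      using step_chain_rank[OF chains(1)] by auto
    show "shuffle_below M N z1 ?u" "shuffle_below M N z1' ?u"
      using step_chain_below[OF chains1(1)] step_chain_below[OF chains1(2)] last by simp_all
    show "step_label S z z1 = min_label S z ?u" "step_label S z z1' = min_label S z ?u"
      using increasing_chain_first_label[OF chains(1) incr(1) S]
        increasing_chain_first_label[OF chains(2) incr(2) S] last by simp_all
  qed (use chains in \<open>simp_all add: step_chain_Cons_Cons\<close>)
qed

lemma increasing_chain_unique:
  assumes "step_chain M N q" "step_chain M N q'" "hd q' = hd q" "last q' = last q"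
    and "successively (<) (chain_labels S q)" "successively (<) (chain_labels S q')"
    and "S \<subseteq> {k. X k \<in> set (hd q)}"
  shows "q = q'"
  using assms
proof (induction q arbitrary: q' S)
  case Nil
  then show ?case by (simp add: step_chain_def)
next
  case (Cons z qs)
  obtain qs' where q': "q' = z # qs'"
    using Cons.prems(2,3) by (cases q') (auto simp: step_chain_def)
  have rank: "shuffle_rank (last (z # qs)) = shuffle_rank z + int (length qs)"
    "shuffle_rank (last (z # qs')) = shuffle_rank z + int (length qs')"
    using step_chain_rank Cons.prems(1,2) q' by blast+
  show ?case
  proof (cases qs)
    case Nil
    then show ?thesis
      using rank Cons.prems(4) q' by simp
  next
    case (Cons z1 r)
    with rank Cons.prems(4) q' obtain z1' r' where qs': "qs' = z1' # r'"
      by (cases qs') auto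
    have chains: "step_chain M N (z # z1 # r)" "step_chain M N (z # z1' # r')"
      using Cons.prems(1,2) q' qs' \<open>qs = z1 # r\<close> by simp_all
    have last': "last (z1' # r') = last (z1 # r)"
      using Cons.prems(4) q' qs' \<open>qs = z1 # r\<close> by simp
    have S: "S \<subseteq> {k. X k \<in> set z}"
      using Cons.prems(7) by simp
    have incr: "successively (<) (chain_labels S (z # z1 # r))"
      "successively (<) (chain_labels S (z # z1' # r'))"
      using Cons.prems(5,6) q' qs' \<open>qs = z1 # r\<close> by simp_all
    have steps: "shuffle_step z z1" and chains1: "step_chain M N (z1 # r)" "step_chain M N (z1' # r')"
      using chains by (simp_all add: step_chain_Cons_Cons)
    have "z1 = z1'"
      using increasing_chains_second_eq[OF chains last' incr S] .
    moreover have "qs = qs'"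
    proof (rule Cons.IH)
      show "successively (<) (chain_labels (spend S z z1) qs)"
        "successively (<) (chain_labels (spend S z z1) qs')"
        using incr \<open>z1 = z1'\<close> qs' \<open>qs = z1 # r\<close> by (auto simp: successively_Cons)
      show "spend S z z1 \<subseteq> {k. X k \<in> set (hd qs)}"
        using spend_subset[OF steps(1) S] \<open>qs = z1 # r\<close> by simp
    qed (use chains1 last' \<open>z1 = z1'\<close> \<open>qs = z1 # r\<close> qs' in auto)
    then show ?thesis
      using q' by simp
  qed
qed

lemma increasing_chain_exists:
  assumes "shuffle_below M N z u" "S \<subseteq> {k. X k \<in> set z}"
  shows "\<exists>q. step_chain M N q \<and> hd q = z \<and> last q = u \<and> successively (<) (chain_labels S q)"
  using assms
proof (induction "nat (shuffle_rank u - shuffle_rank z)" arbitrary: z S rule: less_induct)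
  case less
  show ?case
  proof (cases "z = u")
    case True
    with less.prems show ?thesis
      by (intro exI[of _ "[z]"]) (auto simp: step_chain_def shuffle_below_def)
  next
    case False
    obtain z1 where step: "shuffle_step z z1" and below1: "shuffle_below M N z1 u"
      and min: "step_label S z z1 = min_label S z u"
      using min_label_attained[OF less.prems(1) False] by blast
    let ?S1 = "spend S z z1"
    have S1: "?S1 \<subseteq> {k. X k \<in> set z1}"
      using spend_subset[OF step less.prems(2)] .
    have "shuffle_rank z1 \<le> shuffle_rank u"
      using shuffle_le_rank[OF shuffle_below_imp_le[OF below1]] .
    then have "nat (shuffle_rank u - shuffle_rank z1) < nat (shuffle_rank u - shuffle_rank z)"
      using shuffle_rank_step[OF step] by simp
    then obtain q1 where q1: "step_chain M N q1" "hd q1 = z1" "last q1 = u"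
      "successively (<) (chain_labels ?S1 q1)"
      using less.hyps[OF _ below1 S1] by blast
    then obtain r where r: "q1 = z1 # r"
      by (cases q1) (auto simp: step_chain_def)
    have chain: "step_chain M N (z # z1 # r)"
      using q1(1) r step less.prems(1) by (simp add: step_chain_Cons_Cons shuffle_below_def)
    have "step_label S z z1 < step_label ?S1 z1 z2" if "r = z2 # r'" for z2 r'
    proof -
      have "z1 \<noteq> u"
        using step_chain_rank[of M N z1 r] q1(1,3) r that by auto
      then have "min_label S z u < min_label ?S1 z1 u"
        using min_label_increases[OF less.prems(1) False less.prems(2) step below1 min] by simp
      moreover have "step_label ?S1 z1 z2 = min_label ?S1 z1 u"
        using increasing_chain_first_label[of M N z1 z2 r' ?S1] q1 r that S1 by simp
      ultimately show ?thesis
        using min by simp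
    qed
    then have "successively (<) (chain_labels S (z # z1 # r))"
      using q1(4) r by (cases r) simp_all
    with chain q1(3) r show ?thesis
      by (intro exI[of _ "z # z1 # r"]) simp
  qed
qed

section \<open>The labeling of maximal chains\<close>

lemma spent_concat:
  assumes "\<And>j. j \<le> r \<Longrightarrow> c ! j = p ! j" and "\<And>j. j \<le> i \<Longrightarrow> c ! (r + j) = q ! j"
  shows "spent S c (r + i) = spent (spent S p r) q i"
  using assms(2)
proof (induction i)
  case 0
  then show ?case
    using spent_cong[of r c p S] assms(1) by (simp add: spent_def)
next
  case (Suc i)
  then show ?case
    using Suc.prems[of "Suc i"] by (simp add: spent_Suc)
qed

lemma shuffle_C_labeling:
  "C_labeling (shuffle_words M N) (shuffle_le M N) (shuffle_bot M) (shuffle_top N) (M + N) shuffle_label"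
  unfolding C_labeling_def
proof (intro conjI ballI impI)
  let ?max = "max_chains (shuffle_words M N) (shuffle_le M N) (shuffle_bot M) (shuffle_top N)"
  show "length c = Suc (M + N)" if "c \<in> ?max" for c
    using that step_chain_length_max by (simp add: max_chains_shuffle_iff)
  fix c c' r assume "c \<in> ?max" "c' \<in> ?max" "r \<in> {1..M + N}"
    and take: "take (Suc r) c = take (Suc r) c'"
  then obtain i where r: "r = Suc i"
    by (cases r) auto
  have "c ! j = c' ! j" if "j \<le> r" for j
    using that arg_cong[OF take, of "\<lambda>xs. xs ! j"] by simp
  then show "shuffle_label c r = shuffle_label c' r"
    using spent_cong[of i c c' "{}"] by (simp add: r shuffle_label_eq_step_label)
qed

lemma labels_after_prefix:
  assumes p: "step_chain M N p" and q: "step_chain M N q" "hd q = last p"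
    and take: "take (length p + length q - 1) c = p @ tl q" and i: "Suc i < length q"
  shows "shuffle_label c (length p + i) = chain_labels (spent {} p (length p - 1)) q ! i"
proof -
  obtain r where lp: "length p = Suc r"
    using p by (cases p) (auto simp: step_chain_def)
  have p_ne: "p \<noteq> []" and q_ne: "q \<noteq> []"
    using p q by (simp_all add: step_chain_def)
  have c_pq: "c ! k = (p @ tl q) ! k" if "k < r + length q" for k
    using that arg_cong[OF take, of "\<lambda>xs. xs ! k"] lp by simp
  have c_p: "c ! j = p ! j" if "j \<le> r" for j
    using that c_pq[of j] q_ne lp by (cases q) (auto simp: nth_append)
  have c_q: "c ! (r + j) = q ! j" if "j < length q" for j
  proof (cases j)
    case 0
    then show ?thesis
      using c_p[of r] q(2) lp q_ne p_ne last_conv_nth[of p] by (auto simp: hd_conv_nth)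
  next
    case (Suc j')
    then show ?thesis
      using c_pq[of "r + j"] that lp q_ne by (simp add: nth_append nth_tl)
  qed
  have spent: "spent {} c (r + i) = spent (spent {} p r) q i"
    by (rule spent_concat) (use c_p c_q i in auto)
  have "shuffle_label c (length p + i) = step_label (spent {} c (r + i)) (c ! (r + i)) (c ! Suc (r + i))"
    using shuffle_label_eq_step_label[of c "r + i"] lp by simp
  also have "\<dots> = step_label (spent (spent {} p r) q i) (q ! i) (q ! Suc i)"
    using spent c_q[of i] c_q[of "Suc i"] i by simp
  also have "\<dots> = chain_labels (spent {} p (length p - 1)) q ! i"
    using chain_labels_nth[OF i] lp by simp
  finally show ?thesis .
qed

lemma labels_after_prefix_increasing_iff:
  assumes p: "step_chain M N p" and q: "step_chain M N q" "hd q = last p"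
    and take: "take (length p + length q - 1) c = p @ tl q"
  shows "(\<forall>j. length p - 1 < j \<and> j < length p + length q - 2 \<longrightarrow> shuffle_label c j < shuffle_label c (Suc j))
    \<longleftrightarrow> successively (<) (chain_labels (spent {} p (length p - 1)) q)"
    (is "?lhs \<longleftrightarrow> successively (<) ?labels")
proof -
  have p_ne: "p \<noteq> []"
    using p by (simp add: step_chain_def)
  have "?lhs \<longleftrightarrow> (\<forall>i. Suc i < length ?labels \<longrightarrow> ?labels ! i < ?labels ! Suc i)"
  proof
    assume lhs: ?lhs
    show "\<forall>i. Suc i < length ?labels \<longrightarrow> ?labels ! i < ?labels ! Suc i"
    proof (intro allI impI)
      fix i assume i: "Suc i < length ?labels"
      have "0 < length p"
        using p_ne by simp
      then have "length p - 1 < length p + i"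
        by arith
      moreover have "length p + i < length p + length q - 2"
        using i by (simp add: length_chain_labels)
      ultimately have "shuffle_label c (length p + i) < shuffle_label c (Suc (length p + i))"
        using lhs by blast
      then show "?labels ! i < ?labels ! Suc i"
        using i labels_after_prefix[OF p q take, of i] labels_after_prefix[OF p q take, of "Suc i"]
        by (simp add: length_chain_labels)
    qed
  next
    assume rhs: "\<forall>i. Suc i < length ?labels \<longrightarrow> ?labels ! i < ?labels ! Suc i"
    show ?lhs
    proof (intro allI impI)
      fix j assume j: "length p - 1 < j \<and> j < length p + length q - 2"
      define i where "i = j - length p"
      have "0 < length p"
        using p_ne by simp
      with j have ji: "j = length p + i"
        unfolding i_def by arith
      with j have "Suc (Suc i) < length q"
        by arith
      with ji show "shuffle_label c j < shuffle_label c (Suc j)"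
        using rhs[rule_format, of i]
          labels_after_prefix[OF p q take, of i] labels_after_prefix[OF p q take, of "Suc i"]
        by (simp add: length_chain_labels)
    qed
  qed
  then show ?thesis
    by (simp add: successively_conv_nth)
qed

lemma extend_to_max_chain:
  assumes p: "step_chain M N p" "hd p = shuffle_bot M" and q: "step_chain M N q" "hd q = last p"
  obtains c where "c \<in> max_chains (shuffle_words M N) (shuffle_le M N) (shuffle_bot M) (shuffle_top N)"
    "take (length p + length q - 1) c = p @ tl q"
proof -
  have p_ne: "p \<noteq> []" and q_ne: "q \<noteq> []" and "last q \<in> shuffle_words M N"
    using p q by (auto simp: step_chain_def)
  then obtain s where s: "step_chain M N s" "hd s = last q" "last s = shuffle_top N"
    using increasing_chain_exists[OF shuffle_below_top, of "last q" M N "{}"] by blast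
  have pq: "step_chain M N (p @ tl q)" "last (p @ tl q) = last q"
    using step_chain_append[OF p(1) q(1)] last_append_tl[OF p_ne q_ne] q(2) by simp_all
  have "step_chain M N ((p @ tl q) @ tl s)" "last ((p @ tl q) @ tl s) = shuffle_top N"
    using step_chain_append[OF pq(1) s(1)] last_append_tl[of "p @ tl q" s] pq(2) s p_ne
    by (simp_all add: step_chain_def)
  moreover have "hd ((p @ tl q) @ tl s) = shuffle_bot M"
    using p(2) p_ne by simp
  moreover have "length (p @ tl q) = length p + length q - 1"
    using q_ne by (cases q) simp_all
  then have "take (length p + length q - 1) ((p @ tl q) @ tl s) = p @ tl q"
    by (metis append_eq_conv_conj)
  ultimately show ?thesis
    using that max_chains_shuffle_iff by blast
qed

lemma R_star_condition_iff_increasing: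
  assumes p: "step_chain M N p" "hd p = shuffle_bot M" and q: "step_chain M N q" "hd q = last p"
  shows "(\<forall>c\<in>max_chains (shuffle_words M N) (shuffle_le M N) (shuffle_bot M) (shuffle_top N).
      take (length p + length q - 1) c = p @ tl q \<longrightarrow>
      (\<forall>j. length p - 1 < j \<and> j < length p + length q - 2 \<longrightarrow> shuffle_label c j < shuffle_label c (Suc j)))
    \<longleftrightarrow> successively (<) (chain_labels (spent {} p (length p - 1)) q)"
  using extend_to_max_chain[OF p q] labels_after_prefix_increasing_iff[OF p(1) q] by metis

lemma unique_increasing_completion:
  assumes p: "step_chain M N p" and le: "shuffle_le M N (last p) u"
  shows "\<exists>!q. step_chain M N q \<and> hd q = last p \<and> last q = u \<and>
    successively (<) (chain_labels (spent {} p (length p - 1)) q)"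
proof -
  let ?S = "spent {} p (length p - 1)"
  have p_ne: "p \<noteq> []" and "last p \<in> shuffle_words M N"
    using p by (auto simp: step_chain_def)
  then have below: "shuffle_below M N (last p) u"
    using shuffle_le_imp_below le by blast
  have S: "?S \<subseteq> {k. X k \<in> set (last p)}"
    using spent_subset[OF p, of "length p - 1"] p_ne by (simp add: last_conv_nth)
  obtain q where q: "step_chain M N q" "hd q = last p" "last q = u" "successively (<) (chain_labels ?S q)"
    using increasing_chain_exists[OF below S] by blast
  show ?thesis
  proof (rule ex1I[of _ q])
    fix q' assume "step_chain M N q' \<and> hd q' = last p \<and> last q' = u \<and> successively (<) (chain_labels ?S q')"
    then show "q' = q"
      using increasing_chain_unique[of M N q q' ?S] q S by simp
  qed (use q in blast)
qed

theorem proposition3p4: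
  fixes M N :: nat
  shows "R_star_labeling (shuffle_words M N) (shuffle_le M N) (shuffle_bot M) (shuffle_top N)
           (M + N) shuffle_label"
  unfolding R_star_labeling_def cover_chain_shuffle_iff
proof (intro conjI shuffle_C_labeling allI impI, elim conjE)
  fix p u
  assume p: "step_chain M N p" "hd p = shuffle_bot M" and le: "shuffle_le M N (last p) u"
  show "\<exists>!q. step_chain M N q \<and> hd q = last p \<and> last q = u \<and>
    (\<forall>c\<in>max_chains (shuffle_words M N) (shuffle_le M N) (shuffle_bot M) (shuffle_top N).
      take (length p + length q - 1) c = p @ tl q \<longrightarrow>
      (\<forall>j. length p - 1 < j \<and> j < length p + length q - 2 \<longrightarrow> shuffle_label c j < shuffle_label c (Suc j)))"
    using unique_increasing_completion[OF p(1) le]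
    by (simp only: R_star_condition_iff_increasing[OF p] cong: conj_cong)
qed

end
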